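(* Let $f:\mathbb{R}^n\to(-\infty,+\infty]$ be a closed function that is subdifferentially continuous, let $S=\arg\min f$ be nonempty, and let $\bar x\in S$. Suppose that a set $\mathcal{M}\subset\mathbb{R}^n$ containing $\bar x$ is an identifiable manifold at $\bar x$ for $0\in\hat\partial f(\bar x)$. Then the following are equivalent: (i) (local EB on $(\mathbb{R}^n,d)$) there exist $\epsilon>0,\mu>0$ such that $\mu\,\operatorname{dist}(x,S)\le|\nabla f|(x)$ for all $x\in B_\epsilon(\bar x)$; (ii) (local EB on $(\mathcal{M},d)$) there exist $\epsilon>0,\mu>0$ such that $\mu\,\operatorname{dist}(x,S\cap\mathcal{M})\le|\nabla(f|_{\mathcal{M}})|(x)$ for all $x\in B_\epsilon(\bar x)\cap\mathcal{M}$.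
   Context: $d$ is the Euclidean distance and $B_\epsilon(\bar x)$ the open Euclidean ball. $\hat\partial f$ denotes the Fréchet (regular) subdifferential and $\partial f$ the limiting subdifferential. $x\to_f\bar x$ means $x\to\bar x$ and $f(x)\to f(\bar x)$. $f$ is subdifferentially continuous at $\bar x$ for $\bar v\in\partial f(\bar x)$ if for all sequences $x_k\to\bar x$, $v_k\to\bar v$ with $v_k\in\partial f(x_k)$ one has $f(x_k)\to f(\bar x)$; subdifferentially continuous at $\bar x$ means this holds for every $\bar v\in\partial f(\bar x)$, and "subdifferentially continuous" means at every point. Slope: for $x\in\operatorname{dom}f$, $|\nabla f|(x)=0$ if $x$ is a local minimizer of $f$, and otherwise $|\nabla f|(x)=\limsup_{x'\to x,\,x'\neq x}\frac{f(x)-f(x')}{d(x,x')}$. For $x\in\mathcal{M}$, $|\nabla(f|_{\mathcal{M}})|(x)$ is the same quantity for the restriction $f|_{\mathcal{M}}$, i.e. with $x'$ ranging over $\mathcal{M}$ (and $0$ if $x$ is a local minimizer of $f|_{\mathcal M}$). Identifiable manifold: for a closed $f$, $\bar x\in\operatorname{dom}f$ with $0\in\hat\partial f(\bar x)$, a set $\mathcal{M}\ni\bar x$ is an identifiable manifold at $\bar x$ for $0\in\hat\partial f(\bar x)$ if (Sharpness) $\liminf_{x\to_f\bar x,\;x\notin\mathcal{M},\;y\in\partial f(x)}\|y\|>0$, and (Smoothness) $\mathcal{M}$ is a $C^2$-smooth embedded submanifold of $\mathbb{R}^n$ around $\bar x$ and $f|_{\mathcal{M}}$ is $C^2$-smooth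 around $\bar x$ (i.e. locally agrees on $\mathcal M$ with a $C^2$ function on an open set of $\mathbb{R}^n$). *)

theory Defs
  imports "HOL-Analysis.Analysis"
begin

definition closed_fun :: "('a::euclidean_space \<Rightarrow> ereal) \<Rightarrow> bool" where
  "closed_fun f \<longleftrightarrow> closed {(x, t::real). f x \<le> ereal t}"

definition argmin_set :: "('a \<Rightarrow> ereal) \<Rightarrow> 'a set" where
  "argmin_set f = {x. \<forall>y. f x \<le> f y}"

definition frechet_subdiff :: "('a::euclidean_space \<Rightarrow> ereal) \<Rightarrow> 'a \<Rightarrow> 'a set" where
  "frechet_subdiff f x = {v. f x \<noteq> \<infinity> \<and> f x \<noteq> -\<infinity> \<and>
     Liminf (at x) (\<lambda>y. (f y - f x - ereal (v \<bullet> (y - x))) / ereal (norm (y - x))) \<ge> 0}"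

definition limiting_subdiff :: "('a::euclidean_space \<Rightarrow> ereal) \<Rightarrow> 'a \<Rightarrow> 'a set" where
  "limiting_subdiff f x = {v. f x \<noteq> \<infinity> \<and> f x \<noteq> -\<infinity> \<and>
     (\<exists>xs vs. xs \<longlonglongrightarrow> x \<and> (\<lambda>k. f (xs k)) \<longlonglongrightarrow> f x \<and>
        (\<forall>k. vs k \<in> frechet_subdiff f (xs k)) \<and> vs \<longlonglongrightarrow> v)}"

definition subdiff_continuous_at :: "('a::euclidean_space \<Rightarrow> ereal) \<Rightarrow> 'a \<Rightarrow> bool" where
  "subdiff_continuous_at f x \<longleftrightarrow> (\<forall>v \<in> limiting_subdiff f x. \<forall>xs vs.
     xs \<longlonglongrightarrow> x \<and> vs \<longlonglongrightarrow> v \<and> (\<forall>k. vs k \<in> limiting_subdiff f (xs k))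
       \<longrightarrow> (\<lambda>k. f (xs k)) \<longlonglongrightarrow> f x)"

definition subdiff_continuous :: "('a::euclidean_space \<Rightarrow> ereal) \<Rightarrow> bool" where
  "subdiff_continuous f \<longleftrightarrow> (\<forall>x. subdiff_continuous_at f x)"

definition local_min_on :: "('a::metric_space \<Rightarrow> ereal) \<Rightarrow> 'a set \<Rightarrow> 'a \<Rightarrow> bool" where
  "local_min_on f M x \<longleftrightarrow> (\<exists>\<delta>>0. \<forall>y\<in>M. dist y x < \<delta> \<longrightarrow> f x \<le> f y)"

definition slope_on :: "('a::metric_space \<Rightarrow> ereal) \<Rightarrow> 'a set \<Rightarrow> 'a \<Rightarrow> ereal" where
  "slope_on f M x =
     (if f x = \<infinity> then \<infinity>
      else if local_min_on f M x then 0
      else Limsup (at x within M) (\<lambda>y. (f x - f y) / ereal (dist x y)))"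

abbreviation slope :: "('a::metric_space \<Rightarrow> ereal) \<Rightarrow> 'a \<Rightarrow> ereal" where
  "slope f \<equiv> slope_on f UNIV"

definition C2_on :: "'a::euclidean_space set \<Rightarrow> ('a \<Rightarrow> 'b::euclidean_space) \<Rightarrow> bool" where
  "C2_on U g \<longleftrightarrow> open U \<and> (\<exists>g' g''.
     (\<forall>x\<in>U. (g has_derivative blinfun_apply (g' x)) (at x)) \<and>
     (\<forall>x\<in>U. (g' has_derivative blinfun_apply (g'' x)) (at x)) \<and>
     continuous_on U g'')"

definition C2_submanifold_around :: "'a::euclidean_space set \<Rightarrow> 'a \<Rightarrow> bool" where
  "C2_submanifold_around M xb \<longleftrightarrow> (\<exists>U V \<phi> \<psi> L.
     open U \<and> xb \<in> U \<and> open V \<and> subspace L \<and> C2_on U (\<phi> :: 'a \<Rightarrow> 'a) \<and> C2_on V \<psi> \<and>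
     (\<forall>x\<in>U. \<phi> x \<in> V \<and> \<psi> (\<phi> x) = x) \<and> (\<forall>y\<in>V. \<psi> y \<in> U \<and> \<phi> (\<psi> y) = y) \<and>
     \<phi> ` (M \<inter> U) = V \<inter> L)"

definition C2_restriction_around ::
    "('a::euclidean_space \<Rightarrow> ereal) \<Rightarrow> 'a set \<Rightarrow> 'a \<Rightarrow> bool" where
  "C2_restriction_around f M xb \<longleftrightarrow> (\<exists>U g.
     open U \<and> xb \<in> U \<and> C2_on U (g :: 'a \<Rightarrow> real) \<and> (\<forall>x\<in>M \<inter> U. f x = ereal (g x)))"

text \<open>The sharpness
  liminf condition is written out: liminf > 0 iff the norms are bounded below by some
  eta > 0 near xb (with f-attentive convergence).\<close>
definition identifiable_manifold ::
    "('a::euclidean_space \<Rightarrow> ereal) \<Rightarrow> 'a set \<Rightarrow> 'a \<Rightarrow> bool" where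
  "identifiable_manifold f M xb \<longleftrightarrow>
     f xb \<noteq> \<infinity> \<and> 0 \<in> frechet_subdiff f xb \<and> xb \<in> M \<and>
     (\<exists>\<eta>>0. \<exists>\<delta>>0. \<forall>x y. dist x xb < \<delta> \<and> \<bar>f x - f xb\<bar> < ereal \<delta> \<and> x \<notin> M \<and>
         y \<in> limiting_subdiff f x \<longrightarrow> norm y \<ge> \<eta>) \<and>
     C2_submanifold_around M xb \<and> C2_restriction_around f M xb"

end

theory Submission
  imports Defs
begin

text \<open>
  From the ambient error bound to the one on \<open>M\<close>: an Ekeland-type argument turns the error
  bound into quadratic growth \<open>f x \<ge> min f + \<mu>/4 \<cdot> dist(x, S)\<^sup>2\<close> near \<open>xb\<close>. Minimisers are
  stationary, so by sharpness those near \<open>xb\<close> lie on \<open>M\<close>, where \<open>f\<close> agrees with a \<open>C\<^sup>2\<close>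
  function. Read in a slice chart of \<open>M\<close>, along the segment from a nearest minimiser \<open>s\<close> to
  \<open>x\<close> the derivative vanishes at \<open>s\<close> and the second derivative is almost constant, so the
  directional derivative at \<open>x\<close> is at least the quadratic growth; descending along the image
  of the segment bounds the slope of \<open>f\<close> on \<open>M\<close> from below.

  Conversely, if the ambient error bound fails, proximal points give \<open>Z\<^sub>k \<rightarrow> xb\<close> carrying
  Frechet subgradients \<open>V\<^sub>k \<rightarrow> 0\<close> that are small compared with \<open>dist(Z\<^sub>k, S)\<close>.
  Subdifferential continuity gives \<open>f Z\<^sub>k \<rightarrow> f xb\<close>, so sharpness forces \<open>Z\<^sub>k \<in> M\<close>
  eventually; there the slope of \<open>f\<close> on \<open>M\<close> is at most \<open>|V\<^sub>k|\<close>, contradicting the error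
  bound on \<open>M\<close>.
\<close>

section \<open>Closed functions\<close>

lemma closed_fun_imp_closed_sublevel:
  assumes "closed_fun f"
  shows "closed {x. f x \<le> ereal t}"
proof -
  have "{x. f x \<le> ereal t} = (\<lambda>x. (x, t)) -` {(x, t::real). f x \<le> ereal t}" by auto
  moreover have "closed ((\<lambda>x. (x, t)) -` {(x, t::real). f x \<le> ereal t})"
    by (rule continuous_closed_vimage)
      (use assms[unfolded closed_fun_def] in \<open>auto intro!: continuous_intros\<close>)
  ultimately show ?thesis by simp
qed

lemma closed_fun_imp_closed_argmin_set:
  assumes "closed_fun f"
  shows "closed (argmin_set f)"
proof -
  have "closed {x. f x \<le> c}" for c
  proof (cases c)
    case MInf
    hence "{x. f x \<le> c} = (\<Inter>t. {x. f x \<le> ereal t})" by (auto intro: ereal_bot)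
    thus ?thesis using closed_fun_imp_closed_sublevel[OF assms] by auto
  qed (use closed_fun_imp_closed_sublevel[OF assms] in auto)
  moreover have "argmin_set f = (\<Inter>y. {x. f x \<le> f y})" by (auto simp: argmin_set_def)
  ultimately show ?thesis by auto
qed

lemma closed_fun_add_continuous_attains_min:
  fixes f :: "'a::euclidean_space \<Rightarrow> ereal"
  assumes cf: "closed_fun f" and K: "compact K" "K \<noteq> {}" and q: "continuous_on K q"
  shows "\<exists>z\<in>K. \<forall>y\<in>K. f z + ereal (q z) \<le> f y + ereal (q y)"
proof -
  define F where "F y = f y + ereal (q y)" for y
  define m where "m = (INF y\<in>K. F y)"
  define C where "C t = {y\<in>K. F y \<le> ereal t}" for t
  have shift: "f y + ereal a \<le> ereal t \<longleftrightarrow> f y \<le> ereal (t - a)" for y a t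
    by (cases "f y") auto
  have "C t = K \<inter> (\<lambda>y. (y, t - q y)) -` {(x, t::real). f x \<le> ereal t}" for t
    by (auto simp: C_def F_def shift)
  moreover have "closed (K \<inter> (\<lambda>y. (y, t - q y)) -` {(x, t::real). f x \<le> ereal t})" for t
    by (rule continuous_closed_preimage)
      (use q K cf[unfolded closed_fun_def] compact_imp_closed in \<open>auto intro!: continuous_intros\<close>)
  ultimately have closed_C: "closed (C t)" for t by simp
  text \<open>The sublevel sets above the infimum are nested, so they have the finite intersection property.\<close>
  have "K \<inter> (\<Inter>t\<in>{t. m < ereal t}. C t) \<noteq> {}"
  proof (rule compact_imp_fip_image[OF K(1) closed_C])
    fix T assume T: "finite T" "T \<subseteq> {t. m < ereal t}"
    show "K \<inter> (\<Inter>t\<in>T. C t) \<noteq> {}"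
    proof (cases "T = {}")
      case False
      hence "m < ereal (Min T)" using T by (meson Min_in mem_Collect_eq subsetD)
      then obtain y where "y \<in> K" "F y < ereal (Min T)" unfolding m_def by (meson INF_less_iff)
      thus ?thesis using Min_le[OF T(1)] by (force simp: C_def intro: order_trans[OF less_imp_le])
    qed (use K in auto)
  qed
  then obtain z where z: "z \<in> K" "\<And>t. m < ereal t \<Longrightarrow> z \<in> C t" by auto
  have "F z \<le> m"
  proof (rule ccontr)
    assume "\<not> ?thesis"
    then obtain t where "m < ereal t" "ereal t < F z" by (meson ereal_dense2 less_trans not_le)
    thus False using z(2)[of t] by (auto simp: C_def)
  qed
  moreover have "m \<le> F y" if "y \<in> K" for y unfolding m_def using that by (rule INF_lower)
  ultimately show ?thesis using z(1) unfolding F_def by (meson order_trans)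
qed

section \<open>Slopes\<close>

lemma slope_on_le:
  assumes fin: "f x \<noteq> \<infinity>" "\<forall>y. f y \<noteq> -\<infinity>" and t: "0 \<le> t" and r: "r > 0"
    and growth: "\<forall>y\<in>M. dist y x < r \<longrightarrow> f x - ereal (t * dist y x) \<le> f y"
  shows "slope_on f M x \<le> ereal t"
proof (cases "local_min_on f M x")
  case True
  thus ?thesis using fin t by (simp add: slope_on_def)
next
  case False
  obtain a where a: "f x = ereal a" using fin by (cases "f x") auto
  have "eventually (\<lambda>y. (f x - f y) / ereal (dist x y) \<le> ereal t) (at x within M)"
    unfolding eventually_at
  proof (intro exI[of _ r] conjI allI impI ballI)
    fix y assume y: "y \<in> M" "y \<noteq> x \<and> dist y x < r"
    hence d: "dist x y > 0" by auto
    have le: "f x - ereal (t * dist y x) \<le> f y" using growth y by auto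
    show "(f x - f y) / ereal (dist x y) \<le> ereal t"
    proof (cases "f y")
      case (real b)
      hence "a - t * dist x y \<le> b" using le a by (simp add: dist_commute)
      hence "(a - b) / dist x y \<le> t" using d by (simp add: divide_le_eq)
      thus ?thesis using real a d by simp
    qed (use a d fin in auto)
  qed (use r in auto)
  hence "Limsup (at x within M) (\<lambda>y. (f x - f y) / ereal (dist x y)) \<le> ereal t"
    by (rule Limsup_bounded)
  thus ?thesis using False fin by (simp add: slope_on_def)
qed

lemma slope_on_geI:
  assumes fin: "f x \<noteq> \<infinity>" and not_min: "\<not> local_min_on f M x"
    and near: "\<forall>\<delta>>0. \<exists>y\<in>M. y \<noteq> x \<and> dist y x < \<delta> \<and> a \<le> (f x - f y) / ereal (dist x y)"
  shows "a \<le> slope_on f M x"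
proof -
  have "a \<le> Limsup (at x within M) (\<lambda>y. (f x - f y) / ereal (dist x y))"
    unfolding Limsup_def
  proof (rule INF_greatest)
    fix P assume "P \<in> {P. eventually P (at x within M)}"
    then obtain d where d: "d > 0" "\<forall>y\<in>M. y \<noteq> x \<and> dist y x < d \<longrightarrow> P y"
      unfolding eventually_at by auto
    then obtain y where "y \<in> M" "y \<noteq> x" "dist y x < d" "a \<le> (f x - f y) / ereal (dist x y)"
      using near by blast
    thus "a \<le> (SUP y\<in>Collect P. (f x - f y) / ereal (dist x y))"
      using d by (auto intro: SUP_upper2)
  qed
  thus ?thesis using fin not_min by (simp add: slope_on_def)
qed

lemma slope_on_nonneg:
  assumes fin: "\<forall>y. f y \<noteq> -\<infinity>"
  shows "0 \<le> slope_on f M x"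
proof (cases "f x = \<infinity> \<or> local_min_on f M x")
  case True
  thus ?thesis by (auto simp: slope_on_def)
next
  case False
  then obtain a where a: "f x = ereal a" using fin by (cases "f x") auto
  have "\<exists>y\<in>M. y \<noteq> x \<and> dist y x < \<delta> \<and> 0 \<le> (f x - f y) / ereal (dist x y)" if "\<delta> > 0" for \<delta>
  proof -
    have "\<exists>y\<in>M. dist y x < \<delta> \<and> f y < f x"
      using False that unfolding local_min_on_def by (auto simp: not_le)
    then obtain y where y: "y \<in> M" "dist y x < \<delta>" "f y < f x" by blast
    then obtain b where "f y = ereal b" using a fin by (cases "f y") auto
    moreover have "y \<noteq> x" using y by auto
    ultimately show ?thesis using y a by auto
  qed
  thus ?thesis using False by (intro slope_on_geI) auto
qed

lemma slope_on_ge: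
  assumes fin: "f x \<noteq> \<infinity>" "\<forall>y. f y \<noteq> -\<infinity>" and a: "a > 0"
    and descent: "\<forall>\<delta>>0. \<exists>y\<in>M. y \<noteq> x \<and> dist y x < \<delta> \<and> f y \<le> f x - ereal (a * dist y x)"
  shows "ereal a \<le> slope_on f M x"
proof -
  obtain c where c: "f x = ereal c" using fin by (cases "f x") auto
  have quotient: "f y < f x \<and> ereal a \<le> (f x - f y) / ereal (dist x y)"
    if y: "y \<noteq> x" "f y \<le> f x - ereal (a * dist y x)" for y
  proof -
    have d: "0 < dist x y" using y by simp
    obtain b where b: "f y = ereal b" using y fin c by (cases "f y") auto
    have "b \<le> c - a * dist x y" using y b c by (simp add: dist_commute)
    moreover have "0 < a * dist x y" using a d by simp
    ultimately show ?thesis using b c d by (simp add: le_divide_eq)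
  qed
  have not_min: "\<not> local_min_on f M x"
  proof
    assume "local_min_on f M x"
    then obtain \<delta> where "\<delta> > 0" "\<forall>y\<in>M. dist y x < \<delta> \<longrightarrow> f x \<le> f y"
      unfolding local_min_on_def by auto
    moreover obtain y where "y \<in> M" "y \<noteq> x" "dist y x < \<delta>" "f y \<le> f x - ereal (a * dist y x)"
      using descent \<open>\<delta> > 0\<close> by blast
    ultimately show False using quotient by force
  qed
  moreover have "\<forall>\<delta>>0. \<exists>y\<in>M. y \<noteq> x \<and> dist y x < \<delta> \<and> ereal a \<le> (f x - f y) / ereal (dist x y)"
    using descent quotient by meson
  ultimately show ?thesis using fin by (intro slope_on_geI)
qed

lemma slope_on_lessD:
  assumes slope: "slope_on f M x < ereal t" and t: "0 < t" and fin: "\<forall>y. f y \<noteq> -\<infinity>"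
  shows "\<exists>r>0. \<forall>y\<in>M. dist y x < r \<longrightarrow> f x - ereal (t * dist y x) \<le> f y"
proof -
  have fx: "f x \<noteq> \<infinity>" using slope by (auto simp: slope_on_def)
  then obtain a where a: "f x = ereal a" using fin by (cases "f x") auto
  show ?thesis
  proof (cases "local_min_on f M x")
    case True
    then obtain \<delta> where "\<delta> > 0" "\<forall>y\<in>M. dist y x < \<delta> \<longrightarrow> f x \<le> f y"
      unfolding local_min_on_def by auto
    moreover have "f x - ereal (t * dist y x) \<le> f x" for y using a t by simp
    ultimately show ?thesis by (meson order_trans)
  next
    case False
    hence "Limsup (at x within M) (\<lambda>y. (f x - f y) / ereal (dist x y)) < ereal t"
      using slope fx by (simp add: slope_on_def)
    hence "eventually (\<lambda>y. (f x - f y) / ereal (dist x y) < ereal t) (at x within M)"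
      by (rule Limsup_lessD)
    then obtain d where d: "d > 0"
      "\<forall>y\<in>M. y \<noteq> x \<and> dist y x < d \<longrightarrow> (f x - f y) / ereal (dist x y) < ereal t"
      unfolding eventually_at by auto
    have "f x - ereal (t * dist y x) \<le> f y" if "y \<in> M" "dist y x < d" for y
    proof (cases "y = x")
      case False
      have dp: "0 < dist x y" using False by simp
      have q: "(f x - f y) / ereal (dist x y) < ereal t" using d that False by auto
      show ?thesis
      proof (cases "f y")
        case (real b)
        hence "(a - b) / dist x y < t" using q a dp by simp
        hence "a - b < t * dist x y" using dp by (simp add: divide_less_eq)
        thus ?thesis using real a by (simp add: dist_commute)
      qed (use fin in auto)
    qed (use a t in simp)
    thus ?thesis using d by blast
  qed
qed

lemma slope_on_ge_along_curve:
  fixes \<gamma> :: "real \<Rightarrow> 'a::metric_space"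
  assumes fin: "f x \<noteq> \<infinity>" "\<forall>y. f y \<noteq> -\<infinity>" and pos: "D > 0" "K > 0" "h > 0"
    and curve: "\<And>k. 0 < k \<Longrightarrow> k < h \<Longrightarrow>
      \<gamma> k \<in> M \<and> dist (\<gamma> k) x \<le> K * k \<and> f (\<gamma> k) \<le> f x - ereal (D * k)"
  shows "ereal (D / K) \<le> slope_on f M x"
proof (rule slope_on_ge[OF fin])
  show "D / K > 0" using pos by simp
next
  show "\<forall>\<delta>>0. \<exists>y\<in>M. y \<noteq> x \<and> dist y x < \<delta> \<and> f y \<le> f x - ereal (D / K * dist y x)"
  proof (intro allI impI)
    fix \<delta> :: real assume "\<delta> > 0"
    define k where "k = min (h / 2) (\<delta> / (2 * K))"
    have k: "0 < k" "k < h" "K * k < \<delta>"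
      using pos \<open>\<delta> > 0\<close> by (auto simp: k_def min_def field_simps)
    obtain a where a: "f x = ereal a" using fin by (cases "f x") auto
    have \<gamma>k: "\<gamma> k \<in> M" "dist (\<gamma> k) x \<le> K * k" "f (\<gamma> k) \<le> ereal (a - D * k)"
      using curve[OF k(1,2)] a by auto
    have "D * k > 0" using pos k by simp
    hence "\<gamma> k \<noteq> x" using \<gamma>k(3) a by auto
    moreover have "D / K * dist (\<gamma> k) x \<le> D * k"
      using \<gamma>k(2) pos by (simp add: field_simps)
    ultimately show "\<exists>y\<in>M. y \<noteq> x \<and> dist y x < \<delta> \<and> f y \<le> f x - ereal (D / K * dist y x)"
      using \<gamma>k k a by (intro bexI[of _ "\<gamma> k"]) (auto intro: order_trans)
  qed
qed

lemma slope_le_at_min_plus_dist: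
  assumes fin: "f z \<noteq> \<infinity>" "\<forall>y. f y \<noteq> -\<infinity>" and k: "k \<ge> 0" and r: "r > 0"
    and min: "\<forall>y\<in>ball z r. f z + ereal (k * dist z x) \<le> f y + ereal (k * dist y x)"
  shows "slope f z \<le> ereal k"
proof (rule slope_on_le[OF fin k r], intro ballI impI)
  fix y assume "dist y z < r"
  hence "y \<in> ball z r" by (simp add: dist_commute)
  hence le: "f z + ereal (k * dist z x) \<le> f y + ereal (k * dist y x)"
    using min by blast
  obtain a where a: "f z = ereal a" using fin by (cases "f z") auto
  have tri: "k * dist y x \<le> k * dist y z + k * dist z x"
    using k dist_triangle[of y x z] by (simp add: mult_left_mono flip: distrib_left)
  show "f z - ereal (k * dist y z) \<le> f y"
  proof (cases "f y")
    case (real b)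
    hence "a + k * dist z x \<le> b + k * dist y x" using le a by simp
    thus ?thesis using tri real a by simp
  qed (use fin in auto)
qed

lemma closed_fun_ekeland_cball:
  fixes f :: "'a::euclidean_space \<Rightarrow> ereal"
  assumes cf: "closed_fun f" and fin: "\<forall>y. f y \<noteq> -\<infinity>" and fx: "f x \<noteq> \<infinity>"
    and k: "k \<ge> 0" and d: "d > 0"
  obtains z where "dist z x \<le> d" "f z + ereal (k * dist z x) \<le> f x"
    "dist z x < d \<Longrightarrow> slope f z \<le> ereal k"
proof -
  have "continuous_on (cball x d) (\<lambda>y. k * dist y x)" by (intro continuous_intros)
  moreover have "cball x d \<noteq> {}" using d by simp
  ultimately obtain z where z: "z \<in> cball x d"
    "\<forall>y\<in>cball x d. f z + ereal (k * dist z x) \<le> f y + ereal (k * dist y x)"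
    using closed_fun_add_continuous_attains_min[OF cf compact_cball] by blast
  have le: "f z + ereal (k * dist z x) \<le> f x" using z(2) d by (metis centre_in_cball dist_self
      less_imp_le mult_zero_right add.right_neutral zero_ereal_def)
  have "slope f z \<le> ereal k" if "dist z x < d"
  proof (rule slope_le_at_min_plus_dist[OF _ fin k])
    show "f z \<noteq> \<infinity>" using le fx by auto
    show "d - dist z x > 0" using that by simp
    have "ball z (d - dist z x) \<subseteq> cball x d"
    proof
      fix y assume "y \<in> ball z (d - dist z x)"
      thus "y \<in> cball x d" using dist_triangle[of x y z] by (simp add: dist_commute)
    qed
    thus "\<forall>y\<in>ball z (d - dist z x). f z + ereal (k * dist z x) \<le> f y + ereal (k * dist y x)"
      using z(2) by blast
  qed
  moreover have "dist z x \<le> d" using z(1) by (simp add: dist_commute)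
  ultimately show ?thesis using that le by blast
qed

section \<open>Frechet and limiting subgradients\<close>

lemma argmin_imp_zero_frechet_subdiff:
  assumes x: "x \<in> argmin_set f" and fin: "\<bar>f x\<bar> \<noteq> \<infinity>"
  shows "0 \<in> frechet_subdiff f x"
proof -
  obtain a where a: "f x = ereal a" using fin by (cases "f x") auto
  have "0 \<le> (f y - f x - ereal (0 \<bullet> (y - x))) / ereal (norm (y - x))" for y
  proof -
    have "f x \<le> f y" using x by (simp add: argmin_set_def)
    thus ?thesis using a by (cases "f y"; cases "norm (y - x) = 0") (auto simp: divide_ereal_def)
  qed
  hence "0 \<le> Liminf (at x) (\<lambda>y. (f y - f x - ereal (0 \<bullet> (y - x))) / ereal (norm (y - x)))"
    by (intro Liminf_bounded always_eventually allI)
  thus ?thesis using a by (simp add: frechet_subdiff_def)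
qed

lemma frechet_subdiff_subset_limiting_subdiff: "frechet_subdiff f x \<subseteq> limiting_subdiff f x"
proof
  fix v assume v: "v \<in> frechet_subdiff f x"
  hence "f x \<noteq> \<infinity> \<and> f x \<noteq> -\<infinity>" by (simp add: frechet_subdiff_def)
  moreover have "\<exists>xs vs. xs \<longlonglongrightarrow> x \<and> (\<lambda>k. f (xs k)) \<longlonglongrightarrow> f x \<and>
      (\<forall>k. vs k \<in> frechet_subdiff f (xs k)) \<and> vs \<longlonglongrightarrow> v"
    using v by (intro exI[of _ "\<lambda>_. x"] exI[of _ "\<lambda>_. v"]) simp
  ultimately show "v \<in> limiting_subdiff f x" unfolding limiting_subdiff_def by simp
qed

lemma slope_on_le_norm_frechet_subgradient:
  assumes v: "v \<in> frechet_subdiff f z" and fin: "\<forall>y. f y \<noteq> -\<infinity>"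
  shows "slope_on f M z \<le> ereal (norm v)"
proof (rule ereal_le_epsilon2)
  fix e :: real assume e: "e > 0"
  have fz: "f z \<noteq> \<infinity>" using v by (simp add: frechet_subdiff_def)
  then obtain a where a: "f z = ereal a" using fin by (cases "f z") auto
  have "0 \<le> Liminf (at z) (\<lambda>y. (f y - f z - ereal (v \<bullet> (y - z))) / ereal (norm (y - z)))"
    using v by (simp add: frechet_subdiff_def)
  hence "eventually (\<lambda>y. ereal (-e) < (f y - f z - ereal (v \<bullet> (y - z))) / ereal (norm (y - z))) (at z)"
    unfolding le_Liminf_iff using e by auto
  then obtain d where d: "d > 0" "\<forall>y. y \<noteq> z \<and> dist y z < d \<longrightarrow>
      ereal (-e) < (f y - f z - ereal (v \<bullet> (y - z))) / ereal (norm (y - z))"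
    unfolding eventually_at by auto
  have "f z - ereal ((norm v + e) * dist y z) \<le> f y" if "dist y z < d" for y
  proof (cases "f y")
    case (real b)
    show ?thesis
    proof (cases "y = z")
      case False
      have np: "0 < norm (y - z)" using False by simp
      have "ereal (-e) < (f y - f z - ereal (v \<bullet> (y - z))) / ereal (norm (y - z))"
        using d(2) that False by blast
      hence "-e < (b - a - v \<bullet> (y - z)) / norm (y - z)" using real a np by simp
      hence "-e * norm (y - z) < b - a - v \<bullet> (y - z)" using np by (simp add: less_divide_eq)
      moreover have "- (norm v * norm (y - z)) \<le> v \<bullet> (y - z)"
        using Cauchy_Schwarz_ineq2[of v "y - z"] by (simp add: abs_le_iff)
      ultimately have "a - (norm v + e) * norm (y - z) \<le> b" by (simp add: algebra_simps)
      thus ?thesis using real a by (simp add: dist_norm)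
    qed (use real a in simp)
  qed (use fin in auto)
  hence "slope_on f M z \<le> ereal (norm v + e)"
    using e by (intro slope_on_le[OF fz fin _ d(1)]) auto
  thus "slope_on f M z \<le> ereal (norm v) + ereal e" by simp
qed

lemma frechet_subdiffI_quadratic_minorant:
  assumes fz: "f z = ereal b" and r: "r > 0"
    and minorant: "\<forall>y\<in>ball z r. ereal (b + v \<bullet> (y - z) - c * (norm (y - z))\<^sup>2) \<le> f y"
  shows "v \<in> frechet_subdiff f z"
proof -
  have "eventually (\<lambda>y. ereal l < (f y - f z - ereal (v \<bullet> (y - z))) / ereal (norm (y - z))) (at z)"
    if l: "l < 0" for l
  proof -
    define \<delta> where "\<delta> = min r (- l / (\<bar>c\<bar> + 1))"
    have "- l / (\<bar>c\<bar> + 1) > 0" using l by (intro divide_pos_pos) auto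
    hence \<delta>: "\<delta> > 0" using r by (simp add: \<delta>_def)
    have "ereal l < (f y - f z - ereal (v \<bullet> (y - z))) / ereal (norm (y - z))"
      if y: "y \<noteq> z" "dist y z < \<delta>" for y
    proof -
      define n where "n = norm (y - z)"
      have n: "0 < n" using y by (simp add: n_def)
      have "(\<bar>c\<bar> + 1) * n < - l"
        using y by (simp add: n_def \<delta>_def dist_norm field_simps add_pos_nonneg)
      moreover have "c * n \<le> (\<bar>c\<bar> + 1) * n" using n by (intro mult_right_mono) auto
      ultimately have "l < - c * n" by linarith
      from mult_strict_right_mono[OF this n] have ln: "l * n < - c * n\<^sup>2"
        by (simp add: power2_eq_square)
      have le: "ereal (b + v \<bullet> (y - z) - c * n\<^sup>2) \<le> f y"
        using minorant y \<delta> by (auto simp: n_def \<delta>_def dist_commute)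
      show ?thesis
      proof (cases "f y")
        case (real e)
        hence "l * n < e - b - v \<bullet> (y - z)" using ln le by simp
        thus ?thesis using real fz n by (simp add: n_def less_divide_eq)
      qed (use fz n le in auto)
    qed
    thus ?thesis unfolding eventually_at using \<delta> by blast
  qed
  have "0 \<le> Liminf (at z) (\<lambda>y. (f y - f z - ereal (v \<bullet> (y - z))) / ereal (norm (y - z)))"
    unfolding le_Liminf_iff
  proof (intro allI impI)
    fix l0 :: ereal assume "l0 < 0"
    then obtain l where l: "l0 < ereal l" "ereal l < 0" using ereal_dense2 by blast
    hence "eventually (\<lambda>y. ereal l < (f y - f z - ereal (v \<bullet> (y - z))) / ereal (norm (y - z))) (at z)"
      using \<open>\<And>l. l < 0 \<Longrightarrow> _\<close> by simp
    thus "eventually (\<lambda>y. l0 < (f y - f z - ereal (v \<bullet> (y - z))) / ereal (norm (y - z))) (at z)"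
      by (rule eventually_mono) (use l in auto)
  qed
  thus ?thesis using fz by (simp add: frechet_subdiff_def)
qed

lemma proximal_min_imp_frechet_subgradient:
  assumes fz: "f z = ereal b" and r: "r > 0"
    and min: "\<forall>y\<in>ball z r. f z + ereal (c * (norm (z - x))\<^sup>2) \<le> f y + ereal (c * (norm (y - x))\<^sup>2)"
  shows "(2 * c) *\<^sub>R (x - z) \<in> frechet_subdiff f z"
proof (rule frechet_subdiffI_quadratic_minorant[where f = f, OF fz r], intro ballI)
  fix y assume "y \<in> ball z r"
  hence "f z + ereal (c * (norm (z - x))\<^sup>2) \<le> f y + ereal (c * (norm (y - x))\<^sup>2)"
    using min by blast
  hence le: "ereal (b + c * (norm (z - x))\<^sup>2 - c * (norm (y - x))\<^sup>2) \<le> f y"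
    using fz by (cases "f y") auto
  define p where "p = (y - z) \<bullet> (z - x)"
  have sq: "(norm (y - x))\<^sup>2 = (norm (y - z))\<^sup>2 + 2 * p + (norm (z - x))\<^sup>2"
    unfolding power2_norm_eq_inner p_def by (simp add: algebra_simps inner_commute)
  have lin: "((2 * c) *\<^sub>R (x - z)) \<bullet> (y - z) = - 2 * c * p"
    unfolding p_def by (simp add: algebra_simps inner_commute)
  have eq: "b + ((2 * c) *\<^sub>R (x - z)) \<bullet> (y - z) - c * (norm (y - z))\<^sup>2
      = b + c * (norm (z - x))\<^sup>2 - c * (norm (y - x))\<^sup>2"
    unfolding lin sq by (simp add: algebra_simps)
  show "ereal (b + ((2 * c) *\<^sub>R (x - z)) \<bullet> (y - z) - c * (norm (y - z))\<^sup>2) \<le> f y"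
    unfolding eq by (rule le)
qed

lemma slope_less_imp_frechet_subgradient_near:
  fixes f :: "'a::euclidean_space \<Rightarrow> ereal"
  assumes cf: "closed_fun f" and fin: "\<forall>y. f y \<noteq> -\<infinity>"
    and slope: "slope f x < ereal t" and t: "t > 0" and \<rho>: "\<rho> > 0"
  shows "\<exists>z v. dist z x \<le> \<rho> \<and> v \<in> frechet_subdiff f z \<and> norm v \<le> 2 * t"
proof -
  have "f x \<noteq> \<infinity>" using slope by (auto simp: slope_on_def)
  then obtain a where a: "f x = ereal a" using fin by (cases "f x") auto
  obtain r where r: "r > 0" "\<forall>y. dist y x < r \<longrightarrow> f x - ereal (t * dist y x) \<le> f y"
    using slope_on_lessD[OF slope t fin] by auto
  define R where "R = min \<rho> (r / 2)"
  define c where "c = 2 * t / R"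
  have R: "R > 0" "R \<le> \<rho>" "R < r" using \<rho> r by (auto simp: R_def)
  have c: "c > 0" using t R by (simp add: c_def)
  text \<open>The proximal point \<open>z\<close> of \<open>x\<close>: the slope bound keeps it inside the ball, where its
    optimality condition yields the subgradient \<open>2 c (x - z)\<close>.\<close>
  have "continuous_on (cball x R) (\<lambda>y. c * (norm (y - x))\<^sup>2)" by (intro continuous_intros)
  moreover have "cball x R \<noteq> {}" using R by simp
  ultimately obtain z where z: "z \<in> cball x R"
    "\<forall>y\<in>cball x R. f z + ereal (c * (norm (z - x))\<^sup>2) \<le> f y + ereal (c * (norm (y - x))\<^sup>2)"
    using closed_fun_add_continuous_attains_min[OF cf compact_cball] by blast
  define d where "d = norm (z - x)"
  have "f z + ereal (c * d\<^sup>2) \<le> f x"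
    using z(2)[rule_format, of x] R by (simp add: d_def zero_ereal_def)
  moreover have "dist z x < r" using z(1) R by (simp add: dist_commute)
  hence "f x - ereal (t * d) \<le> f z" using r by (simp add: d_def dist_norm)
  ultimately obtain b where b: "f z = ereal b" "b + c * d\<^sup>2 \<le> a" "a - t * d \<le> b"
    using a by (cases "f z") auto
  hence "c * d * d \<le> t * d" by (simp add: power2_eq_square algebra_simps)
  hence d: "d \<le> R / 2"
    using c t R by (cases "d = 0") (auto simp: d_def c_def field_simps)
  have "ball z (R / 2) \<subseteq> cball x R"
  proof
    fix y assume "y \<in> ball z (R / 2)"
    hence "dist x y \<le> dist x z + dist z y" "dist z y < R / 2" by (auto intro: dist_triangle)
    thus "y \<in> cball x R" using d by (simp add: d_def dist_norm norm_minus_commute)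
  qed
  hence "(2 * c) *\<^sub>R (x - z) \<in> frechet_subdiff f z"
    using z(2) R by (intro proximal_min_imp_frechet_subgradient[where f = f, OF b(1), of "R / 2"]) auto
  moreover have "norm ((2 * c) *\<^sub>R (x - z)) \<le> 2 * t"
  proof -
    have "norm ((2 * c) *\<^sub>R (x - z)) = 2 * c * d" using c by (simp add: d_def norm_minus_commute)
    also have "\<dots> \<le> 2 * c * (R / 2)" using d c by simp
    finally show ?thesis using R by (simp add: c_def)
  qed
  moreover have "dist z x \<le> \<rho>" using d R by (simp add: d_def dist_norm)
  ultimately show ?thesis by blast
qed

section \<open>Error bound on the manifold implies error bound\<close>

lemma error_bound_violation_imp_small_subgradient:
  fixes f :: "'a::euclidean_space \<Rightarrow> ereal"
  assumes cf: "closed_fun f" and fin: "\<forall>y. f y \<noteq> -\<infinity>" and xb: "xb \<in> S"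
    and e: "e > 0" and x: "dist x xb < e" and slope: "slope f x < ereal (e * infdist x S)"
  shows "\<exists>z v. dist z xb < 2 * e \<and> v \<in> frechet_subdiff f z \<and> 0 < infdist z S
    \<and> norm v \<le> 4 * e * infdist z S \<and> norm v \<le> 2 * e\<^sup>2"
proof -
  define D where "D = infdist x S"
  have "0 \<le> slope f x" by (rule slope_on_nonneg[OF fin])
  from order.strict_trans1[OF this slope] have D: "0 < D"
    using e by (simp add: D_def zero_less_mult_iff)
  have "D < e" using infdist_le[OF xb, of x] x by (simp add: D_def)
  have "0 < e * D" using e D by simp
  then obtain z v where z: "dist z x \<le> D / 2" and v: "v \<in> frechet_subdiff f z" "norm v \<le> 2 * (e * D)"
    using slope_less_imp_frechet_subgradient_near[OF cf fin slope[folded D_def] _ half_gt_zero[OF D]]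
    by blast
  have "D \<le> infdist z S + dist x z" unfolding D_def by (rule infdist_triangle)
  hence Dz: "D / 2 \<le> infdist z S" using z by (simp add: dist_commute)
  have "dist z xb \<le> dist z x + dist x xb" by (rule dist_triangle)
  hence "dist z xb < 2 * e" using z x D \<open>D < e\<close> by linarith
  moreover have "e * D \<le> e * (2 * infdist z S)" using Dz e by (intro mult_left_mono) auto
  hence "norm v \<le> 4 * e * infdist z S" using v(2) by simp
  moreover have "e * D \<le> e * e" using \<open>D < e\<close> e by (intro mult_left_mono) auto
  hence "norm v \<le> 2 * e\<^sup>2" using v(2) by (simp add: power2_eq_square)
  ultimately show ?thesis using v(1) Dz D by (intro exI conjI) auto
qed

lemma not_error_bound_imp_vanishing_subgradients:
  fixes f :: "'a::euclidean_space \<Rightarrow> ereal"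
  assumes cf: "closed_fun f" and fin: "\<forall>y. f y \<noteq> -\<infinity>" and xb: "xb \<in> S"
    and no_bound: "\<not> (\<exists>\<epsilon>>0. \<exists>\<mu>>0. \<forall>x\<in>ball xb \<epsilon>. ereal (\<mu> * infdist x S) \<le> slope f x)"
  obtains Z V where "Z \<longlonglongrightarrow> xb" "V \<longlonglongrightarrow> 0" "\<And>k. V k \<in> frechet_subdiff f (Z k)"
    "\<And>k. 0 < infdist (Z k) S" "\<And>k. norm (V k) * real (Suc k) \<le> 4 * infdist (Z k) S"
proof -
  define e where "e k = inverse (real (Suc k))" for k
  have e: "e k > 0" "e k \<le> 1" "4 * e k * real (Suc k) = 4" for k
    by (simp_all add: e_def inverse_le_1_iff)
  define good where "good k z v \<longleftrightarrow> dist z xb < 2 * e k \<and> v \<in> frechet_subdiff f z \<and>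
      0 < infdist z S \<and> norm v \<le> 4 * e k * infdist z S \<and> norm v \<le> 2 * (e k)\<^sup>2" for k z v
  have "\<exists>z v. good k z v" for k
  proof -
    have "\<forall>\<epsilon>>0. \<forall>\<mu>>0. \<exists>x\<in>ball xb \<epsilon>. slope f x < ereal (\<mu> * infdist x S)"
      using no_bound by (auto simp: not_le)
    with e(1)[of k] obtain x where x: "x \<in> ball xb (e k)" "slope f x < ereal (e k * infdist x S)"
      by blast
    show ?thesis unfolding good_def
      by (rule error_bound_violation_imp_small_subgradient[OF cf fin xb e(1)[of k], of x])
        (use x in \<open>auto simp: dist_commute\<close>)
  qed
  hence "\<exists>Z. \<forall>k. \<exists>v. good k (Z k) v" by (intro choice allI)
  then obtain Z where "\<forall>k. \<exists>v. good k (Z k) v" ..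
  hence "\<exists>V. \<forall>k. good k (Z k) (V k)" by (rule choice)
  then obtain V where V: "\<forall>k. good k (Z k) (V k)" ..
  have ZV: "\<And>k. dist (Z k) xb < 2 * e k" "\<And>k. V k \<in> frechet_subdiff f (Z k)"
    "\<And>k. 0 < infdist (Z k) S" "\<And>k. norm (V k) \<le> 4 * e k * infdist (Z k) S"
    "\<And>k. norm (V k) \<le> 2 * (e k)\<^sup>2"
    using V unfolding good_def by blast+
  have e_lim: "(\<lambda>k. 2 * e k) \<longlonglongrightarrow> 0"
    unfolding e_def using tendsto_mult_right_zero[OF LIMSEQ_inverse_real_of_nat] by simp
  have "\<forall>\<^sub>F k in sequentially. norm (dist (Z k) xb) \<le> 2 * e k" using ZV(1) by (simp add: less_imp_le)
  hence "(\<lambda>k. dist (Z k) xb) \<longlonglongrightarrow> 0" by (rule Lim_null_comparison[OF _ e_lim])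
  hence Z: "Z \<longlonglongrightarrow> xb" by (rule tendsto_dist_iff[THEN iffD2])
  have V: "V \<longlonglongrightarrow> 0"
  proof (rule Lim_null_comparison[OF _ e_lim, THEN tendsto_norm_zero_iff[THEN iffD1]])
    have "norm (V k) \<le> 2 * e k" for k
    proof -
      have "(e k)\<^sup>2 \<le> e k" using e(1,2)[of k] by (simp add: power2_eq_square mult_left_le)
      thus ?thesis using ZV(5)[of k] by linarith
    qed
    thus "\<forall>\<^sub>F k in sequentially. norm (norm (V k)) \<le> 2 * e k" by simp
  qed
  have "norm (V k) * real (Suc k) \<le> 4 * infdist (Z k) S" for k
  proof -
    have "norm (V k) * real (Suc k) \<le> 4 * e k * infdist (Z k) S * real (Suc k)"
      by (rule mult_right_mono[OF ZV(4)]) simp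
    also have "\<dots> = 4 * e k * real (Suc k) * infdist (Z k) S" by (simp only: mult_ac)
    finally show ?thesis by (simp only: e(3))
  qed
  with Z V ZV(2,3) show ?thesis by (rule that)
qed

lemma identifiable_manifold_eventually_contains:
  assumes idm: "identifiable_manifold f M xb" and sc: "subdiff_continuous f"
    and Z: "Z \<longlonglongrightarrow> xb" and V: "V \<longlonglongrightarrow> 0" and sub: "\<And>k. V k \<in> frechet_subdiff f (Z k)"
  shows "eventually (\<lambda>k. Z k \<in> M) sequentially"
proof -
  obtain \<eta> \<delta> where \<eta>: "\<eta> > 0" and \<delta>: "\<delta> > 0" and sharp: "\<forall>x y. dist x xb < \<delta> \<and>
      \<bar>f x - f xb\<bar> < ereal \<delta> \<and> x \<notin> M \<and> y \<in> limiting_subdiff f x \<longrightarrow> \<eta> \<le> norm y"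
    using idm unfolding identifiable_manifold_def by blast
  have "0 \<in> frechet_subdiff f xb" using idm by (simp add: identifiable_manifold_def)
  then obtain m where m: "f xb = ereal m" by (cases "f xb") (auto simp: frechet_subdiff_def)
  have "0 \<in> limiting_subdiff f xb"
    using \<open>0 \<in> frechet_subdiff f xb\<close> frechet_subdiff_subset_limiting_subdiff by blast
  moreover have "\<forall>k. V k \<in> limiting_subdiff f (Z k)"
    using sub frechet_subdiff_subset_limiting_subdiff by blast
  ultimately have fZ: "(\<lambda>k. f (Z k)) \<longlonglongrightarrow> ereal m"
    using sc Z V m unfolding subdiff_continuous_def subdiff_continuous_at_def by metis
  have "eventually (\<lambda>k. ereal (m - \<delta>) < f (Z k) \<and> f (Z k) < ereal (m + \<delta>)) sequentially"
    using \<delta> by (intro eventually_conj order_tendstoD[OF fZ]) auto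
  moreover have "eventually (\<lambda>k. dist (Z k) xb < \<delta>) sequentially"
    using Z \<delta> by (rule tendstoD)
  moreover have "eventually (\<lambda>k. dist (V k) 0 < \<eta>) sequentially"
    using V \<eta> by (rule tendstoD)
  ultimately show ?thesis
  proof eventually_elim
    case (elim k)
    have "\<bar>f (Z k) - f xb\<bar> < ereal \<delta>" using elim(1) m by (cases "f (Z k)") auto
    moreover have "V k \<in> limiting_subdiff f (Z k)"
      using sub[of k] frechet_subdiff_subset_limiting_subdiff by blast
    ultimately have "Z k \<notin> M \<Longrightarrow> \<eta> \<le> norm (V k)" using sharp elim(2) by blast
    thus "Z k \<in> M" using elim(3) by force
  qed
qed

lemma error_bound_on_manifold_imp_error_bound:
  fixes f :: "'a::euclidean_space \<Rightarrow> ereal"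
  assumes cf: "closed_fun f" and fin: "\<forall>y. f y \<noteq> -\<infinity>" and sc: "subdiff_continuous f"
    and idm: "identifiable_manifold f M xb" and xb: "xb \<in> S"
    and \<epsilon>: "\<epsilon> > 0" and \<mu>: "\<mu> > 0"
    and bound_on_M: "\<forall>x\<in>ball xb \<epsilon> \<inter> M. ereal (\<mu> * infdist x (S \<inter> M)) \<le> slope_on f M x"
  shows "\<exists>\<epsilon>>0. \<exists>\<mu>>0. \<forall>x\<in>ball xb \<epsilon>. ereal (\<mu> * infdist x S) \<le> slope f x"
proof (rule ccontr)
  assume no_bound: "\<not> ?thesis"
  obtain Z V where Z: "Z \<longlonglongrightarrow> xb" and V: "V \<longlonglongrightarrow> 0"
    and ZV: "\<And>k. V k \<in> frechet_subdiff f (Z k)" "\<And>k. 0 < infdist (Z k) S"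
      "\<And>k. norm (V k) * real (Suc k) \<le> 4 * infdist (Z k) S"
    using not_error_bound_imp_vanishing_subgradients[OF cf fin xb no_bound] by blast
  obtain N :: nat where N: "4 / \<mu> < real N" using reals_Archimedean2 by blast
  have "eventually (\<lambda>k. Z k \<in> M) sequentially"
    using identifiable_manifold_eventually_contains[OF idm sc Z V ZV(1)] .
  moreover have "eventually (\<lambda>k. dist (Z k) xb < \<epsilon>) sequentially" using Z \<epsilon> by (rule tendstoD)
  ultimately have "eventually (\<lambda>k. Z k \<in> M \<and> dist (Z k) xb < \<epsilon> \<and> N \<le> k) sequentially"
    by (intro eventually_conj eventually_ge_at_top)
  then obtain k where k: "Z k \<in> M" "Z k \<in> ball xb \<epsilon>" "N \<le> k"
    using eventually_happens'[OF sequentially_bot] by (auto simp: dist_commute)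
  define d where "d = infdist (Z k) (S \<inter> M)"
  have "xb \<in> M" using idm by (simp add: identifiable_manifold_def)
  hence "infdist (Z k) S \<le> d" unfolding d_def using xb by (intro infdist_mono) auto
  hence d: "0 < d" using ZV(2)[of k] by linarith
  have "ereal (\<mu> * d) \<le> slope_on f M (Z k)"
    using bound_on_M k unfolding d_def by blast
  also have "\<dots> \<le> ereal (norm (V k))"
    by (rule slope_on_le_norm_frechet_subgradient[OF ZV(1) fin])
  finally have "\<mu> * d * real (Suc k) \<le> norm (V k) * real (Suc k)"
    by (intro mult_right_mono) auto
  also have "\<dots> \<le> 4 * d" using ZV(3)[of k] \<open>infdist (Z k) S \<le> d\<close> by linarith
  finally have "d * (\<mu> * real (Suc k)) \<le> d * 4" by (simp add: mult_ac)
  hence "\<mu> * real (Suc k) \<le> 4" using d by (simp only: mult_le_cancel_left_pos)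
  moreover have "4 < \<mu> * real N" using N \<mu> by (simp add: field_simps)
  moreover have "\<mu> * real N \<le> \<mu> * real (Suc k)" using k(3) \<mu> by simp
  ultimately show False by linarith
qed

section \<open>Error bound implies quadratic growth\<close>

lemma error_bound_imp_quadratic_growth:
  fixes f :: "'a::euclidean_space \<Rightarrow> ereal"
  assumes cf: "closed_fun f" and fin: "\<forall>y. f y \<noteq> -\<infinity>" and xb: "xb \<in> argmin_set f"
    and \<epsilon>: "\<epsilon> > 0" and \<mu>: "\<mu> > 0"
    and bound: "\<forall>x\<in>ball xb \<epsilon>. ereal (\<mu> * infdist x (argmin_set f)) \<le> slope f x"
    and x: "x \<in> ball xb (\<epsilon> / 2)"
  shows "f xb + ereal (\<mu> / 4 * (infdist x (argmin_set f))\<^sup>2) \<le> f x"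
proof (rule ccontr)
  define S where "S = argmin_set f"
  define d where "d = infdist x S"
  define k where "k = \<mu> / 2 * d"
  assume "\<not> ?thesis"
  hence less: "f x < f xb + ereal (\<mu> / 4 * d\<^sup>2)" by (simp add: S_def d_def not_le)
  have min: "f xb \<le> f y" for y using xb by (simp add: argmin_set_def)
  then obtain m a where m: "f xb = ereal m" and a: "f x = ereal a"
    using less fin[rule_format, of xb] fin[rule_format, of x] min[of x]
    by (cases "f xb"; cases "f x") auto
  have a_lt: "a < m + \<mu> / 4 * d\<^sup>2" and "m \<le> a" using less min[of x] m a by auto
  hence d: "d > 0" using infdist_nonneg[of x S] \<mu> by (cases "d = 0") (auto simp: d_def)
  have "d \<le> dist x xb" unfolding d_def S_def using xb by (rule infdist_le)
  hence "d < \<epsilon> / 2" using x by (simp add: dist_commute)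
  have "k \<ge> 0" using \<mu> d by (simp add: k_def)
  then obtain z where z: "dist z x \<le> d" "f z + ereal (k * dist z x) \<le> f x"
    "dist z x < d \<Longrightarrow> slope f z \<le> ereal k"
    using closed_fun_ekeland_cball[OF cf fin _ _ d, of x k] a by auto
  then obtain b where b: "f z = ereal b" "b + k * dist z x \<le> a" using fin a by (cases "f z") auto
  have "m \<le> b" using min[of z] m b by simp
  hence "\<mu> / 2 * d * dist z x < \<mu> / 2 * d * (d / 2)"
    using a_lt b(2) by (simp add: k_def power2_eq_square algebra_simps)
  hence zx: "dist z x < d / 2" using \<mu> d by (simp add: mult_less_cancel_left_pos)
  hence slope_z: "slope f z \<le> ereal k" using z(3) d by simp
  have "dist z xb < \<epsilon>"
    using dist_triangle[of z xb x] zx \<open>d < \<epsilon> / 2\<close> x \<epsilon> by (simp add: dist_commute)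
  hence "z \<in> ball xb \<epsilon>" by (simp add: dist_commute)
  hence "ereal (\<mu> * infdist z S) \<le> slope f z" using bound by (simp add: S_def)
  also have "\<dots> \<le> ereal k" by (rule slope_z)
  finally have "\<mu> * infdist z S \<le> \<mu> * (d / 2)" by (simp add: k_def)
  hence "infdist z S \<le> d / 2" using \<mu> by simp
  moreover have "d \<le> infdist z S + dist x z" unfolding d_def by (rule infdist_triangle)
  ultimately show False using zx by (simp add: dist_commute)
qed

lemma identifiable_manifold_contains_nearby_minimizers:
  assumes idm: "identifiable_manifold f M xb" and xb: "xb \<in> argmin_set f"
  shows "\<exists>\<delta>>0. \<forall>s\<in>argmin_set f. dist s xb < \<delta> \<longrightarrow> s \<in> M"
proof -
  obtain \<eta> \<delta> where \<eta>: "\<eta> > 0" and \<delta>: "\<delta> > 0" and sharp: "\<forall>x y. dist x xb < \<delta> \<and>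
      \<bar>f x - f xb\<bar> < ereal \<delta> \<and> x \<notin> M \<and> y \<in> limiting_subdiff f x \<longrightarrow> \<eta> \<le> norm y"
    using idm unfolding identifiable_manifold_def by blast
  have "0 \<in> frechet_subdiff f xb" using idm by (simp add: identifiable_manifold_def)
  then obtain m where m: "f xb = ereal m" by (cases "f xb") (auto simp: frechet_subdiff_def)
  have "s \<in> M" if s: "s \<in> argmin_set f" "dist s xb < \<delta>" for s
  proof (rule ccontr)
    assume "s \<notin> M"
    have "f s = f xb" using s(1) xb by (auto simp: argmin_set_def intro: antisym)
    hence "0 \<in> limiting_subdiff f s"
      using argmin_imp_zero_frechet_subdiff[OF s(1)] m frechet_subdiff_subset_limiting_subdiff by auto
    moreover have "\<bar>f s - f xb\<bar> < ereal \<delta>" using \<open>f s = f xb\<close> m \<delta> by simp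
    ultimately have "\<eta> \<le> norm (0::'a)" using sharp s(2) \<open>s \<notin> M\<close> by blast
    thus False using \<eta> by simp
  qed
  thus ?thesis using \<delta> by blast
qed

section \<open>Calculus along segments of a chart\<close>

lemma lipschitz_near_of_continuous_derivative:
  fixes F :: "'a::euclidean_space \<Rightarrow> 'b::euclidean_space"
  assumes U: "open U" "p \<in> U" and dF: "\<forall>x\<in>U. (F has_derivative blinfun_apply (F' x)) (at x)"
    and cF: "isCont F' p"
  shows "\<exists>r>0. \<exists>L>0. ball p r \<subseteq> U \<and> (\<forall>x\<in>ball p r. \<forall>y\<in>ball p r. norm (F x - F y) \<le> L * norm (x - y))"
proof -
  obtain r1 where r1: "r1 > 0" "ball p r1 \<subseteq> U" using U open_contains_ball by blast
  obtain r2 where r2: "r2 > 0" "\<forall>x. dist x p < r2 \<longrightarrow> dist (F' x) (F' p) < 1"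
    using cF unfolding continuous_at_eps_delta by (meson zero_less_one)
  define r where "r = min r1 r2"
  define L where "L = norm (F' p) + 1"
  have r: "r > 0" using r1 r2 by (simp add: r_def)
  have sub: "ball p r \<subseteq> U" using r1 by (auto simp: r_def)
  have "norm (F x - F y) \<le> L * norm (x - y)" if x: "x \<in> ball p r" and y: "y \<in> ball p r" for x y
  proof (rule differentiable_bound[OF convex_ball _ _ x y])
    fix z assume z: "z \<in> ball p r"
    show "(F has_derivative blinfun_apply (F' z)) (at z within ball p r)"
      using dF sub z by (meson has_derivative_at_withinI subsetD)
    have "dist (F' z) (F' p) < 1" using r2 z by (auto simp: r_def dist_commute)
    hence "norm (F' z) \<le> L" unfolding L_def dist_norm using norm_triangle_ineq2[of "F' z" "F' p"] by linarith
    thus "onorm (blinfun_apply (F' z)) \<le> L" by (simp add: norm_blinfun.rep_eq)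
  qed
  moreover have "L > 0" by (simp add: L_def add_nonneg_pos)
  ultimately show ?thesis using r sub by blast
qed

lemma C2_on_imp_lipschitz_near:
  fixes F :: "'a::euclidean_space \<Rightarrow> 'b::euclidean_space"
  assumes "C2_on U F" "p \<in> U"
  shows "\<exists>r>0. \<exists>L>0. ball p r \<subseteq> U \<and> (\<forall>x\<in>ball p r. \<forall>y\<in>ball p r. norm (F x - F y) \<le> L * norm (x - y))"
  using assms unfolding C2_on_def
  by (metis has_derivative_continuous lipschitz_near_of_continuous_derivative)

lemma norm_blinfun_apply2_le:
  assumes "norm x \<le> a" "norm y \<le> b"
  shows "norm (blinfun_apply (blinfun_apply B x) y) \<le> norm B * a * b"
proof -
  have "norm (blinfun_apply (blinfun_apply B x) y) \<le> norm (blinfun_apply B x) * norm y" by (rule norm_blinfun)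
  also have "\<dots> \<le> norm B * norm x * norm y" by (intro mult_right_mono norm_blinfun) auto
  also have "\<dots> \<le> norm B * a * b"
    using assms order_trans[OF norm_ge_zero assms(1)] by (intro mult_mono mult_left_mono) auto
  finally show ?thesis .
qed

text \<open>The second derivative at \<open>0\<close> of \<open>t \<mapsto> g (\<psi> (w + t v))\<close>, expressed through the
  derivatives of \<open>g\<close> and \<open>\<psi>\<close>.\<close>
definition comp_second_deriv :: "('a::euclidean_space \<Rightarrow> 'a \<Rightarrow>\<^sub>L real) \<Rightarrow> ('a \<Rightarrow> 'a \<Rightarrow>\<^sub>L 'a \<Rightarrow>\<^sub>L real)
    \<Rightarrow> ('a \<Rightarrow> 'a) \<Rightarrow> ('a \<Rightarrow> 'a \<Rightarrow>\<^sub>L 'a) \<Rightarrow> ('a \<Rightarrow> 'a \<Rightarrow>\<^sub>L 'a \<Rightarrow>\<^sub>L 'a) \<Rightarrow> 'a \<Rightarrow> 'a \<Rightarrow> real" where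
  "comp_second_deriv g' g'' \<psi> \<psi>' \<psi>'' w v = g'' (\<psi> w) (\<psi>' w v) (\<psi>' w v) + g' (\<psi> w) (\<psi>'' w v v)"

lemma quadratic_form_diff_le:
  fixes B B0 :: "'a::real_normed_vector \<Rightarrow>\<^sub>L 'a \<Rightarrow>\<^sub>L real" and P P0 :: "'a \<Rightarrow>\<^sub>L 'a"
    and C C0 :: "'a \<Rightarrow>\<^sub>L real" and Q Q0 :: "'a \<Rightarrow>\<^sub>L 'a \<Rightarrow>\<^sub>L 'a"
  shows "\<bar>(B (P v) (P v) + C (Q v v)) - (B0 (P0 v) (P0 v) + C0 (Q0 v v))\<bar>
    \<le> (norm (B - B0) * norm P * norm P + norm B0 * norm (P - P0) * (norm P + norm P0)
        + norm (C - C0) * norm Q + norm C0 * norm (Q - Q0)) * (norm v)\<^sup>2"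
proof -
  define p where "p = P v"
  define p0 where "p0 = P0 v"
  have split: "(B (P v) (P v) + C (Q v v)) - (B0 (P0 v) (P0 v) + C0 (Q0 v v))
     = (B - B0) p p + B0 (p - p0) p + B0 p0 (p - p0) + (C - C0) (Q v v) + C0 ((Q - Q0) v v)"
    by (simp add: p_def p0_def blinfun.diff_left blinfun.diff_right)
  have np: "norm p \<le> norm P * norm v" unfolding p_def by (rule norm_blinfun)
  have np0: "norm p0 \<le> norm P0 * norm v" unfolding p0_def by (rule norm_blinfun)
  have npp: "norm (p - p0) \<le> norm (P - P0) * norm v"
    unfolding p_def p0_def by (metis blinfun.diff_left norm_blinfun)
  have "norm ((B - B0) p p) \<le> norm (B - B0) * (norm P * norm v) * (norm P * norm v)"
    and "norm (B0 (p - p0) p) \<le> norm B0 * (norm (P - P0) * norm v) * (norm P * norm v)"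
    and "norm (B0 p0 (p - p0)) \<le> norm B0 * (norm P0 * norm v) * (norm (P - P0) * norm v)"
    by (rule norm_blinfun_apply2_le; fact)+
  moreover have "norm ((C - C0) (Q v v)) \<le> norm (C - C0) * (norm Q * norm v * norm v)"
    and "norm (C0 ((Q - Q0) v v)) \<le> norm C0 * (norm (Q - Q0) * norm v * norm v)"
    by (rule order_trans[OF norm_blinfun], intro mult_left_mono norm_blinfun_apply2_le; simp)+
  moreover have "\<bar>(B - B0) p p + B0 (p - p0) p + B0 p0 (p - p0) + (C - C0) (Q v v) + C0 ((Q - Q0) v v)\<bar>
     \<le> norm ((B - B0) p p) + norm (B0 (p - p0) p) + norm (B0 p0 (p - p0)) + norm ((C - C0) (Q v v))
        + norm (C0 ((Q - Q0) v v))" by simp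
  ultimately show ?thesis unfolding split by (simp add: power2_eq_square algebra_simps)
qed

lemma comp_second_deriv_locally_uniform:
  fixes g' :: "'a::euclidean_space \<Rightarrow> 'a \<Rightarrow>\<^sub>L real"
  assumes c1: "isCont (\<lambda>w. g'' (\<psi> w)) w0" and c2: "isCont \<psi>' w0"
    and c3: "isCont (\<lambda>w. g' (\<psi> w)) w0" and c4: "isCont \<psi>'' w0" and \<omega>: "\<omega> > 0"
  shows "\<exists>r>0. \<forall>w\<in>ball w0 r. \<forall>v.
    \<bar>comp_second_deriv g' g'' \<psi> \<psi>' \<psi>'' w v - comp_second_deriv g' g'' \<psi> \<psi>' \<psi>'' w0 v\<bar> \<le> \<omega> * (norm v)\<^sup>2"
proof -
  define K where "K w = norm (g'' (\<psi> w) - g'' (\<psi> w0)) * norm (\<psi>' w) * norm (\<psi>' w)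
     + norm (g'' (\<psi> w0)) * norm (\<psi>' w - \<psi>' w0) * (norm (\<psi>' w) + norm (\<psi>' w0))
     + norm (g' (\<psi> w) - g' (\<psi> w0)) * norm (\<psi>'' w) + norm (g' (\<psi> w0)) * norm (\<psi>'' w - \<psi>'' w0)" for w
  have "isCont K w0" unfolding K_def using c1 c2 c3 c4 by (intro continuous_intros) auto
  moreover have "K w0 = 0" by (simp add: K_def)
  ultimately obtain r where r: "r > 0" "\<forall>w. dist w w0 < r \<longrightarrow> dist (K w) 0 < \<omega>"
    using \<omega> unfolding continuous_at_eps_delta by metis
  show ?thesis
  proof (intro exI[of _ r] conjI r(1) ballI allI)
    fix w v assume w: "w \<in> ball w0 r"
    have Kw: "K w \<le> \<omega>" using r(2) w by (auto simp: dist_commute)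
    have "\<bar>comp_second_deriv g' g'' \<psi> \<psi>' \<psi>'' w v - comp_second_deriv g' g'' \<psi> \<psi>' \<psi>'' w0 v\<bar> \<le> K w * (norm v)\<^sup>2"
      unfolding comp_second_deriv_def K_def by (rule quadratic_form_diff_le)
    also have "\<dots> \<le> \<omega> * (norm v)\<^sup>2" using Kw by (intro mult_right_mono) auto
    finally show "\<bar>comp_second_deriv g' g'' \<psi> \<psi>' \<psi>'' w v - comp_second_deriv g' g'' \<psi> \<psi>' \<psi>'' w0 v\<bar> \<le> \<omega> * (norm v)\<^sup>2" .
  qed
qed

lemma derivative_ge_twice_increment:
  fixes \<Phi> \<Phi>' \<Phi>'' :: "real \<Rightarrow> real"
  assumes D1: "\<And>t. 0 \<le> t \<Longrightarrow> t \<le> 1 \<Longrightarrow> (\<Phi> has_real_derivative \<Phi>' t) (at t)"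
    and D2: "\<And>t. 0 \<le> t \<Longrightarrow> t \<le> 1 \<Longrightarrow> (\<Phi>' has_real_derivative \<Phi>'' t) (at t)"
    and crit: "\<Phi>' 0 = 0" and near_const: "\<And>t. 0 \<le> t \<Longrightarrow> t \<le> 1 \<Longrightarrow> \<bar>\<Phi>'' t - E\<bar> \<le> \<omega>"
  shows "2 * (\<Phi> 1 - \<Phi> 0) - 2 * \<omega> \<le> \<Phi>' 1"
proof -
  define diff where "diff m = (if m = 0 then \<Phi> else if m = 1 then \<Phi>' else \<Phi>'')" for m :: nat
  have "\<exists>t. 0 < t \<and> t < 1 \<and>
      \<Phi> 1 = (\<Sum>m<2. diff m 0 / fact m * (1 - 0) ^ m) + diff 2 t / fact 2 * (1 - 0) ^ 2"
  proof (rule Taylor_up)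
    show "\<forall>m t. m < 2 \<and> 0 \<le> t \<and> t \<le> 1 \<longrightarrow> (diff m has_real_derivative diff (Suc m) t) (at t)"
      using D1 D2 by (auto simp: diff_def less_2_cases_iff)
  qed (simp_all add: diff_def)
  then obtain \<xi> where \<xi>: "0 < \<xi>" "\<xi> < 1" "\<Phi> 1 = \<Phi> 0 + \<Phi>'' \<xi> / 2"
    using crit by (auto simp: diff_def eval_nat_numeral)
  obtain \<zeta> where \<zeta>: "0 < \<zeta>" "\<zeta> < 1" "\<Phi>' 1 - \<Phi>' 0 = (1 - 0) * \<Phi>'' \<zeta>"
    using MVT2[of 0 1 \<Phi>' \<Phi>''] D2 by auto
  show ?thesis
    using near_const[of \<xi>] near_const[of \<zeta>] \<xi> \<zeta> crit by (simp add: abs_le_iff)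
qed

lemma has_real_derivative_pos_imp_left_decrease:
  assumes D: "(\<Phi> has_real_derivative D) (at x)" and pos: "D > 0"
  shows "\<exists>h>0. \<forall>k. 0 < k \<longrightarrow> k < h \<longrightarrow> \<Phi> (x - k) \<le> \<Phi> x - D / 2 * k"
proof -
  obtain h where h: "h > 0"
    "\<forall>k. k \<noteq> 0 \<and> norm (k - 0) < h \<longrightarrow> norm ((\<Phi> (x + k) - \<Phi> x) / k - D) < D / 2"
    using LIM_D[OF DERIV_D[OF D], of "D / 2"] pos by auto
  have "\<Phi> (x - k) \<le> \<Phi> x - D / 2 * k" if k: "0 < k" "k < h" for k
  proof -
    have "(\<Phi> (x + - k) - \<Phi> x) / - k = (\<Phi> x - \<Phi> (x - k)) / k"
      using k by (simp add: field_simps)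
    hence "\<bar>(\<Phi> x - \<Phi> (x - k)) / k - D\<bar> < D / 2" using h(2)[rule_format, of "- k"] k by simp
    hence "D / 2 < (\<Phi> x - \<Phi> (x - k)) / k" by linarith
    thus ?thesis using k by (simp add: less_divide_eq)
  qed
  thus ?thesis using h(1) by blast
qed

lemma segment_in_convex_inter_subspace:
  assumes "convex B" "subspace L" "s \<in> B \<inter> L" "x \<in> B \<inter> L" "0 \<le> t" "t \<le> 1"
  shows "s + t *\<^sub>R (x - s) \<in> B \<inter> L"
proof -
  have "(1 - t) *\<^sub>R s + t *\<^sub>R x \<in> B" using assms by (intro convexD_alt) auto
  moreover have "s + t *\<^sub>R (x - s) \<in> L" using assms by (intro subspace_add subspace_scale subspace_diff) auto
  ultimately show ?thesis by (simp add: algebra_simps)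
qed

context
  fixes \<psi> :: "'a::euclidean_space \<Rightarrow> 'a" and \<psi>' :: "'a \<Rightarrow> 'a \<Rightarrow>\<^sub>L 'a"
    and \<psi>'' :: "'a \<Rightarrow> 'a \<Rightarrow>\<^sub>L 'a \<Rightarrow>\<^sub>L 'a" and g :: "'a \<Rightarrow> real" and g' :: "'a \<Rightarrow> 'a \<Rightarrow>\<^sub>L real"
    and g'' :: "'a \<Rightarrow> 'a \<Rightarrow>\<^sub>L 'a \<Rightarrow>\<^sub>L real" and B :: "'a set"
  assumes B: "open B" "convex B"
    and d\<psi>: "\<And>w. w \<in> B \<Longrightarrow> (\<psi> has_derivative \<psi>' w) (at w)"
    and dd\<psi>: "\<And>w. w \<in> B \<Longrightarrow> (\<psi>' has_derivative \<psi>'' w) (at w)"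
    and dg: "\<And>w. w \<in> B \<Longrightarrow> (g has_derivative g' (\<psi> w)) (at (\<psi> w))"
    and ddg: "\<And>w. w \<in> B \<Longrightarrow> (g' has_derivative g'' (\<psi> w)) (at (\<psi> w))"
begin

lemma has_real_derivative_comp_line:
  assumes "a + t *\<^sub>R v \<in> B"
  shows "((\<lambda>t. g (\<psi> (a + t *\<^sub>R v))) has_real_derivative g' (\<psi> (a + t *\<^sub>R v)) (\<psi>' (a + t *\<^sub>R v) v)) (at t)"
proof -
  have line: "((\<lambda>t. a + t *\<^sub>R v) has_derivative (\<lambda>h. h *\<^sub>R v)) (at t)"
    by (auto intro!: derivative_eq_intros)
  note comp = has_derivative_compose[OF has_derivative_compose[OF line d\<psi>[OF assms]] dg[OF assms]]
  show ?thesis unfolding has_field_derivative_def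
    by (rule has_derivative_eq_rhs[OF comp]) (auto simp: blinfun.scaleR_right)
qed

lemma has_real_derivative_comp_line_deriv:
  assumes "a + t *\<^sub>R v \<in> B"
  shows "((\<lambda>t. g' (\<psi> (a + t *\<^sub>R v)) (\<psi>' (a + t *\<^sub>R v) v)) has_real_derivative
    comp_second_deriv g' g'' \<psi> \<psi>' \<psi>'' (a + t *\<^sub>R v) v) (at t)"
proof -
  have line: "((\<lambda>t. a + t *\<^sub>R v) has_derivative (\<lambda>h. h *\<^sub>R v)) (at t)"
    by (auto intro!: derivative_eq_intros)
  note outer = has_derivative_compose[OF has_derivative_compose[OF line d\<psi>[OF assms]] ddg[OF assms]]
  note inner = blinfun.FDERIV[OF has_derivative_compose[OF line dd\<psi>[OF assms]] has_derivative_const[of v]]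
  show ?thesis unfolding has_field_derivative_def comp_second_deriv_def
    by (rule has_derivative_eq_rhs[OF blinfun.FDERIV[OF outer inner]])
      (auto simp: blinfun.scaleR_right blinfun.scaleR_left algebra_simps)
qed

lemma comp_line_derivative_ge_twice_increment:
  assumes L: "subspace L" and s: "s \<in> B \<inter> L" and x: "x \<in> B \<inter> L"
    and min: "\<forall>w\<in>B \<inter> L. g (\<psi> s) \<le> g (\<psi> w)"
    and near_const: "\<forall>w\<in>B. \<bar>comp_second_deriv g' g'' \<psi> \<psi>' \<psi>'' w (x - s) - E\<bar> \<le> \<omega>"
  shows "2 * (g (\<psi> x) - g (\<psi> s)) - 2 * \<omega> \<le> g' (\<psi> x) (\<psi>' x (x - s))"
proof -
  define v where "v = x - s"
  define \<Phi> where "\<Phi> t = g (\<psi> (s + t *\<^sub>R v))" for t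
  define \<Phi>' where "\<Phi>' t = g' (\<psi> (s + t *\<^sub>R v)) (\<psi>' (s + t *\<^sub>R v) v)" for t
  have seg: "s + t *\<^sub>R v \<in> B \<inter> L" if "0 \<le> t" "t \<le> 1" for t
    unfolding v_def using B(2) L s x that by (rule segment_in_convex_inter_subspace)
  text \<open>\<open>\<Phi>\<close> has a local minimum at \<open>0\<close>, since the line through \<open>s\<close> and \<open>x\<close> stays in \<open>L\<close>.\<close>
  have "((\<lambda>t. s + t *\<^sub>R v) \<longlongrightarrow> s) (at 0)" by (auto intro!: tendsto_eq_intros)
  hence "eventually (\<lambda>t. s + t *\<^sub>R v \<in> B) (at 0)" using B(1) s by (auto dest: topological_tendstoD)
  hence "eventually (\<lambda>t. \<Phi> 0 \<le> \<Phi> t) (at 0)"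
  proof eventually_elim
    case (elim t)
    moreover have "s + t *\<^sub>R v \<in> L" using L s x by (simp add: v_def subspace_add subspace_scale subspace_diff)
    ultimately show ?case using min by (simp add: \<Phi>_def)
  qed
  moreover have "(\<Phi> has_real_derivative \<Phi>' 0) (at 0)"
    unfolding \<Phi>_def \<Phi>'_def using s by (intro has_real_derivative_comp_line) simp
  ultimately have "(*) (\<Phi>' 0) = (\<lambda>h. 0)"
    by (intro has_derivative_local_min) (simp_all add: has_field_derivative_def)
  hence crit: "\<Phi>' 0 = 0" by (metis mult.right_neutral)
  have "2 * (\<Phi> 1 - \<Phi> 0) - 2 * \<omega> \<le> \<Phi>' 1"
  proof (rule derivative_ge_twice_increment[where \<Phi>'' = "\<lambda>t. comp_second_deriv g' g'' \<psi> \<psi>' \<psi>'' (s + t *\<^sub>R v) v"])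
    show "\<Phi>' 0 = 0" by (rule crit)
  next
    fix t :: real assume "0 \<le> t" "t \<le> 1"
    hence t: "s + t *\<^sub>R v \<in> B" using seg by blast
    show "(\<Phi> has_real_derivative \<Phi>' t) (at t)"
      unfolding \<Phi>_def \<Phi>'_def using t by (rule has_real_derivative_comp_line)
    show "(\<Phi>' has_real_derivative comp_second_deriv g' g'' \<psi> \<psi>' \<psi>'' (s + t *\<^sub>R v) v) (at t)"
      unfolding \<Phi>'_def using t by (rule has_real_derivative_comp_line_deriv)
    show "\<bar>comp_second_deriv g' g'' \<psi> \<psi>' \<psi>'' (s + t *\<^sub>R v) v - E\<bar> \<le> \<omega>"
      using near_const t by (simp add: v_def)
  qed
  thus ?thesis by (simp add: \<Phi>_def \<Phi>'_def v_def)
qed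

lemma slope_on_ge_comp_line_derivative:
  fixes f :: "'a \<Rightarrow> ereal"
  assumes fin: "\<forall>y. f y \<noteq> -\<infinity>" and L: "subspace L"
    and lip: "K > 0" "\<forall>a\<in>B. \<forall>b\<in>B. norm (\<psi> a - \<psi> b) \<le> K * norm (a - b)"
    and on_M: "\<forall>w\<in>B \<inter> L. \<psi> w \<in> M \<and> f (\<psi> w) = ereal (g (\<psi> w))"
    and s: "s \<in> B \<inter> L" and x: "x \<in> B \<inter> L" and D: "g' (\<psi> x) (\<psi>' x (x - s)) > 0"
  shows "ereal (g' (\<psi> x) (\<psi>' x (x - s)) / (2 * K * norm (x - s))) \<le> slope_on f M (\<psi> x)"
proof -
  define v where "v = x - s"
  define D where "D = g' (\<psi> x) (\<psi>' x v)"
  have nv: "norm v > 0" using D by (auto simp: v_def)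
  have D_pos: "D > 0" using D by (simp add: D_def v_def)
  have "((\<lambda>t. g (\<psi> (s + t *\<^sub>R v))) has_real_derivative D) (at 1)"
    using has_real_derivative_comp_line[of s 1 v] x by (simp add: D_def v_def)
  then obtain h where h: "h > 0" "\<forall>k. 0 < k \<longrightarrow> k < h \<longrightarrow>
      g (\<psi> (s + (1 - k) *\<^sub>R v)) \<le> g (\<psi> (s + 1 *\<^sub>R v)) - D / 2 * k"
    using has_real_derivative_pos_imp_left_decrease D_pos by blast
  have "ereal (D / 2 / (K * norm v)) \<le> slope_on f M (\<psi> x)"
  proof (rule slope_on_ge_along_curve[where \<gamma> = "\<lambda>k. \<psi> (s + (1 - k) *\<^sub>R v)" and h = "min h 1"])
    fix k :: real assume k: "0 < k" "k < min h 1"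
    hence w: "s + (1 - k) *\<^sub>R v \<in> B \<inter> L"
      using segment_in_convex_inter_subspace[OF B(2) L s x] by (simp add: v_def)
    have "dist (\<psi> (s + (1 - k) *\<^sub>R v)) (\<psi> x) \<le> K * norm ((s + (1 - k) *\<^sub>R v) - x)"
      using lip(2) w x by (simp add: dist_norm)
    also have "(s + (1 - k) *\<^sub>R v) - x = (- k) *\<^sub>R v" by (simp add: v_def algebra_simps)
    finally have "dist (\<psi> (s + (1 - k) *\<^sub>R v)) (\<psi> x) \<le> K * norm v * k" using k by (simp add: mult_ac)
    moreover have "f (\<psi> (s + (1 - k) *\<^sub>R v)) \<le> f (\<psi> x) - ereal (D / 2 * k)"
      using h(2) k on_M w x by (simp add: v_def)
    ultimately show "\<psi> (s + (1 - k) *\<^sub>R v) \<in> M \<and> dist (\<psi> (s + (1 - k) *\<^sub>R v)) (\<psi> x) \<le> K * norm v * k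
        \<and> f (\<psi> (s + (1 - k) *\<^sub>R v)) \<le> f (\<psi> x) - ereal (D / 2 * k)"
      using on_M w by blast
  qed (use fin on_M x D_pos lip(1) nv h(1) in auto)
  thus ?thesis by (simp add: D_def v_def mult.assoc)
qed

lemma slope_on_ge_in_chart:
  fixes f :: "'a \<Rightarrow> ereal"
  assumes fin: "\<forall>y. f y \<noteq> -\<infinity>" and L: "subspace L"
    and lip: "K > 0" "\<forall>a\<in>B. \<forall>b\<in>B. norm (\<psi> a - \<psi> b) \<le> K * norm (a - b)"
    and on_M: "\<forall>w\<in>B \<inter> L. \<psi> w \<in> M \<and> f (\<psi> w) = ereal (g (\<psi> w))"
    and s: "s \<in> B \<inter> L" "\<psi> s \<in> T" and x: "x \<in> B \<inter> L"
    and min: "\<forall>w\<in>B \<inter> L. g (\<psi> s) \<le> g (\<psi> w)"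
    and c: "c > 0" and growth: "c * (norm (x - s))\<^sup>2 \<le> g (\<psi> x) - g (\<psi> s)"
    and near_const: "\<forall>w\<in>B. \<bar>comp_second_deriv g' g'' \<psi> \<psi>' \<psi>'' w (x - s) - E\<bar> \<le> c / 2 * (norm (x - s))\<^sup>2"
  shows "ereal (c / (2 * K\<^sup>2) * infdist (\<psi> x) T) \<le> slope_on f M (\<psi> x)"
proof (cases "x = s")
  case True
  hence "infdist (\<psi> x) T = 0" using s(2) by (simp add: infdist_zero)
  thus ?thesis using slope_on_nonneg[OF fin] by (simp add: zero_ereal_def)
next
  case False
  define n where "n = norm (x - s)"
  define D where "D = g' (\<psi> x) (\<psi>' x (x - s))"
  have n: "n > 0" using False by (simp add: n_def)
  have D_ge: "c * n\<^sup>2 \<le> D"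
    using comp_line_derivative_ge_twice_increment[OF L s(1) x min near_const] growth
    by (simp add: D_def n_def)
  moreover have "0 < c * n\<^sup>2" using c n by simp
  ultimately have "D > 0" by linarith
  hence "ereal (D / (2 * K * n)) \<le> slope_on f M (\<psi> x)"
    using slope_on_ge_comp_line_derivative[OF fin L lip on_M s(1) x] by (simp add: D_def n_def)
  moreover have "c / (2 * K\<^sup>2) * infdist (\<psi> x) T \<le> D / (2 * K * n)"
  proof -
    have "infdist (\<psi> x) T \<le> K * n"
      using infdist_le[OF s(2), of "\<psi> x"] lip(2) x s(1) by (force simp: dist_norm n_def)
    hence "c / (2 * K\<^sup>2) * infdist (\<psi> x) T \<le> c / (2 * K\<^sup>2) * (K * n)"
      using c by (intro mult_left_mono) auto
    also have "\<dots> = c * n\<^sup>2 / (2 * K * n)" using lip(1) n by (simp add: field_simps power2_eq_square)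
    also have "\<dots> \<le> D / (2 * K * n)" using D_ge lip(1) n by (simp add: divide_right_mono)
    finally show ?thesis .
  qed
  ultimately show ?thesis by (meson ereal_less_eq(3) order_trans)
qed

end

section \<open>Error bound on the manifold from quadratic growth\<close>

text \<open>A shrunk slice chart of \<open>M\<close> at \<open>xb\<close>: \<open>\<phi>\<close> flattens \<open>M\<close> into the subspace \<open>L\<close>,
  \<open>\<psi>\<close> parametrises \<open>M\<close> back from \<open>L\<close>, and \<open>g\<close> is the \<open>C\<^sup>2\<close> function that agrees with \<open>f\<close> on \<open>M\<close>.\<close>
locale C2_slice_chart =
  fixes f :: "'a::euclidean_space \<Rightarrow> ereal" and M :: "'a set" and xb :: 'a and r :: real
    and \<phi> \<psi> :: "'a \<Rightarrow> 'a" and L :: "'a set" and L\<phi> L\<psi> :: real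
    and \<psi>' :: "'a \<Rightarrow> 'a \<Rightarrow>\<^sub>L 'a" and \<psi>'' :: "'a \<Rightarrow> 'a \<Rightarrow>\<^sub>L 'a \<Rightarrow>\<^sub>L 'a"
    and g :: "'a \<Rightarrow> real" and g' :: "'a \<Rightarrow> 'a \<Rightarrow>\<^sub>L real" and g'' :: "'a \<Rightarrow> 'a \<Rightarrow>\<^sub>L 'a \<Rightarrow>\<^sub>L real"
  assumes subspace: "subspace L" and positive: "r > 0" "L\<phi> > 0" "L\<psi> > 0"
    and chart: "\<And>x. x \<in> ball xb r \<Longrightarrow> x \<in> M \<Longrightarrow> \<phi> x \<in> L \<and> \<psi> (\<phi> x) = x"
    and restriction: "\<And>x. x \<in> ball xb r \<Longrightarrow> x \<in> M \<Longrightarrow> f x = ereal (g x)"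
    and lipschitz_chart:
      "\<And>x y. x \<in> ball xb r \<Longrightarrow> y \<in> ball xb r \<Longrightarrow> norm (\<phi> x - \<phi> y) \<le> L\<phi> * norm (x - y)"
    and lipschitz_param:
      "\<And>w w'. w \<in> ball (\<phi> xb) r \<Longrightarrow> w' \<in> ball (\<phi> xb) r \<Longrightarrow> norm (\<psi> w - \<psi> w') \<le> L\<psi> * norm (w - w')"
    and param: "\<And>w. w \<in> ball (\<phi> xb) r \<Longrightarrow> w \<in> L \<Longrightarrow> \<psi> w \<in> M \<and> f (\<psi> w) = ereal (g (\<psi> w))"
    and deriv_param: "\<And>w. w \<in> ball (\<phi> xb) r \<Longrightarrow> (\<psi> has_derivative \<psi>' w) (at w)"
    and deriv2_param: "\<And>w. w \<in> ball (\<phi> xb) r \<Longrightarrow> (\<psi>' has_derivative \<psi>'' w) (at w)"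
    and deriv_restriction: "\<And>w. w \<in> ball (\<phi> xb) r \<Longrightarrow> (g has_derivative g' (\<psi> w)) (at (\<psi> w))"
    and deriv2_restriction: "\<And>w. w \<in> ball (\<phi> xb) r \<Longrightarrow> (g' has_derivative g'' (\<psi> w)) (at (\<psi> w))"
    and second_deriv_continuous: "\<forall>\<omega>>0. \<exists>\<delta>>0. \<forall>w\<in>ball (\<phi> xb) \<delta>. \<forall>v.
      \<bar>comp_second_deriv g' g'' \<psi> \<psi>' \<psi>'' w v - comp_second_deriv g' g'' \<psi> \<psi>' \<psi>'' (\<phi> xb) v\<bar> \<le> \<omega> * (norm v)\<^sup>2"

lemma C2_submanifold_local_parametrization:
  fixes f :: "'a::euclidean_space \<Rightarrow> ereal"
  assumes M: "C2_submanifold_around M xb" and fM: "C2_restriction_around f M xb"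
  obtains r \<phi> \<psi> L L\<phi> L\<psi> \<psi>' \<psi>'' g g' g'' where "C2_slice_chart f M xb r \<phi> \<psi> L L\<phi> L\<psi> \<psi>' \<psi>'' g g' g''"
proof -
  obtain U V \<phi> \<psi> L where U: "open U" "xb \<in> U" and V: "open V" and L: "subspace L"
    and C\<phi>: "C2_on U (\<phi> :: 'a \<Rightarrow> 'a)" and C\<psi>: "C2_on V \<psi>"
    and UV: "\<forall>x\<in>U. \<phi> x \<in> V \<and> \<psi> (\<phi> x) = x" and img: "\<phi> ` (M \<inter> U) = V \<inter> L"
    using M unfolding C2_submanifold_around_def by blast
  obtain Ug g where Ug: "open Ug" "xb \<in> Ug" and Cg: "C2_on Ug (g :: 'a \<Rightarrow> real)"
    and fg: "\<forall>x\<in>M \<inter> Ug. f x = ereal (g x)"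
    using fM unfolding C2_restriction_around_def by blast
  obtain \<psi>' \<psi>'' where d\<psi>: "\<forall>x\<in>V. (\<psi> has_derivative blinfun_apply (\<psi>' x)) (at x)"
    and dd\<psi>: "\<forall>x\<in>V. (\<psi>' has_derivative blinfun_apply (\<psi>'' x)) (at x)" and c\<psi>'': "continuous_on V \<psi>''"
    using C\<psi> unfolding C2_on_def by blast
  obtain g' g'' where dg: "\<forall>x\<in>Ug. (g has_derivative blinfun_apply (g' x)) (at x)"
    and ddg: "\<forall>x\<in>Ug. (g' has_derivative blinfun_apply (g'' x)) (at x)" and cg'': "continuous_on Ug g''"
    using Cg unfolding C2_on_def by blast
  have V_xb: "\<phi> xb \<in> V" "\<psi> (\<phi> xb) = xb" using UV U by auto
  have cont_\<psi>: "isCont \<psi> (\<phi> xb)" using d\<psi> V_xb by (meson has_derivative_continuous)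
  obtain r\<phi> L\<phi> where r\<phi>: "r\<phi> > 0" "L\<phi> > 0" "ball xb r\<phi> \<subseteq> U"
    "\<forall>x\<in>ball xb r\<phi>. \<forall>y\<in>ball xb r\<phi>. norm (\<phi> x - \<phi> y) \<le> L\<phi> * norm (x - y)"
    using C2_on_imp_lipschitz_near[OF C\<phi> U(2)] by blast
  obtain r\<psi> L\<psi> where r\<psi>: "r\<psi> > 0" "L\<psi> > 0" "ball (\<phi> xb) r\<psi> \<subseteq> V"
    "\<forall>w\<in>ball (\<phi> xb) r\<psi>. \<forall>w'\<in>ball (\<phi> xb) r\<psi>. norm (\<psi> w - \<psi> w') \<le> L\<psi> * norm (w - w')"
    using C2_on_imp_lipschitz_near[OF C\<psi> V_xb(1)] by blast
  obtain eU where eU: "eU > 0" "ball xb eU \<subseteq> Ug" using Ug open_contains_ball by blast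
  obtain rU where rU: "rU > 0" "\<forall>w. dist w (\<phi> xb) < rU \<longrightarrow> dist (\<psi> w) xb < eU"
    using cont_\<psi> eU(1) V_xb(2) unfolding continuous_at_eps_delta by metis
  define r where "r = min (min r\<phi> eU) (min r\<psi> rU)"
  have r: "r > 0" "ball xb r \<subseteq> U" "ball xb r \<subseteq> Ug" "ball (\<phi> xb) r \<subseteq> V"
    using r\<phi> r\<psi> rU eU by (auto simp: r_def)
  have \<psi>_Ug: "\<psi> w \<in> Ug" if "w \<in> ball (\<phi> xb) r" for w
    using rU(2) eU(2) that by (auto simp: r_def dist_commute)
  have "C2_slice_chart f M xb r \<phi> \<psi> L L\<phi> L\<psi> \<psi>' \<psi>'' g g' g''"
  proof
    show "\<phi> x \<in> L \<and> \<psi> (\<phi> x) = x" "f x = ereal (g x)" if "x \<in> ball xb r" "x \<in> M" for x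
      using that UV img r(2,3) fg by blast+
    show "norm (\<phi> x - \<phi> y) \<le> L\<phi> * norm (x - y)" if "x \<in> ball xb r" "y \<in> ball xb r" for x y
      using r\<phi>(4) that by (simp add: r_def)
    show "norm (\<psi> w - \<psi> w') \<le> L\<psi> * norm (w - w')"
      if "w \<in> ball (\<phi> xb) r" "w' \<in> ball (\<phi> xb) r" for w w'
      using r\<psi>(4) that by (simp add: r_def)
    fix w assume w: "w \<in> ball (\<phi> xb) r"
    thus "(\<psi> has_derivative \<psi>' w) (at w)" "(\<psi>' has_derivative \<psi>'' w) (at w)"
      "(g has_derivative g' (\<psi> w)) (at (\<psi> w))" "(g' has_derivative g'' (\<psi> w)) (at (\<psi> w))"
      using d\<psi> dd\<psi> dg ddg r(4) \<psi>_Ug[OF w] by blast+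
    assume "w \<in> L"
    then obtain p where "p \<in> M \<inter> U" "w = \<phi> p" using img r(4) w by (metis IntI imageE subsetD)
    thus "\<psi> w \<in> M \<and> f (\<psi> w) = ereal (g (\<psi> w))" using UV fg \<psi>_Ug[OF w] by auto
  next
    show "\<forall>\<omega>>0. \<exists>\<delta>>0. \<forall>w\<in>ball (\<phi> xb) \<delta>. \<forall>v. \<bar>comp_second_deriv g' g'' \<psi> \<psi>' \<psi>'' w v
        - comp_second_deriv g' g'' \<psi> \<psi>' \<psi>'' (\<phi> xb) v\<bar> \<le> \<omega> * (norm v)\<^sup>2"
    proof (intro allI impI comp_second_deriv_locally_uniform)
      show "isCont (\<lambda>w. g'' (\<psi> w)) (\<phi> xb)"
        using cg'' Ug V_xb(2) by (intro isCont_o2[OF cont_\<psi>]) (simp add: continuous_on_eq_continuous_at)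
      show "isCont (\<lambda>w. g' (\<psi> w)) (\<phi> xb)"
        using ddg Ug V_xb(2) by (intro isCont_o2[OF cont_\<psi>]) (metis has_derivative_continuous)
      show "isCont \<psi>' (\<phi> xb)" "isCont \<psi>'' (\<phi> xb)"
        using dd\<psi> c\<psi>'' V V_xb(1) by (auto intro: has_derivative_continuous
            simp: continuous_on_eq_continuous_at)
    qed
  qed (use L r r\<phi> r\<psi> in auto)
  thus ?thesis by (rule that)
qed

lemma (in C2_slice_chart) chart_near:
  assumes y: "y \<in> M" "dist y xb < t" and t: "t \<le> r"
  shows "y \<in> ball xb r" "\<phi> y \<in> ball (\<phi> xb) (L\<phi> * t) \<inter> L" "\<psi> (\<phi> y) = y"
proof -
  show y_r: "y \<in> ball xb r" using y t by (simp add: dist_commute)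
  have "dist (\<phi> xb) (\<phi> y) \<le> L\<phi> * dist xb y"
    using lipschitz_chart[OF _ y_r] positive(1) by (simp add: dist_norm)
  also have "\<dots> < L\<phi> * t" using y positive(2) by (simp add: dist_commute)
  finally show "\<phi> y \<in> ball (\<phi> xb) (L\<phi> * t) \<inter> L" "\<psi> (\<phi> y) = y" using chart[OF y_r y(1)] by auto
qed

lemma (in C2_slice_chart) slope_on_ge_near:
  assumes fin: "\<forall>y. f y \<noteq> -\<infinity>" and \<alpha>: "\<alpha> > 0"
    and x: "x \<in> M" "dist x xb < t" and s: "s \<in> argmin_set f \<inter> M" "dist s xb < t"
    and t: "t \<le> r" "L\<phi> * t \<le> \<delta>" "\<delta> \<le> r"
    and close: "\<forall>w\<in>ball (\<phi> xb) \<delta>. \<forall>v. \<bar>comp_second_deriv g' g'' \<psi> \<psi>' \<psi>'' w v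
      - comp_second_deriv g' g'' \<psi> \<psi>' \<psi>'' (\<phi> xb) v\<bar> \<le> \<alpha> / (2 * L\<phi>\<^sup>2) * (norm v)\<^sup>2"
    and growth: "f s + ereal (\<alpha> * (dist x s)\<^sup>2) \<le> f x"
  shows "ereal (\<alpha> / (2 * L\<phi>\<^sup>2 * L\<psi>\<^sup>2) * infdist x (argmin_set f \<inter> M)) \<le> slope_on f M x"
proof -
  define B where "B = ball (\<phi> xb) \<delta>"
  define c where "c = \<alpha> / L\<phi>\<^sup>2"
  have c: "c > 0" using \<alpha> positive by (simp add: c_def)
  have B: "B \<subseteq> ball (\<phi> xb) r" "open B" "convex B" using t(3) by (auto simp: B_def)
  have "ball (\<phi> xb) (L\<phi> * t) \<subseteq> B" using t(2) by (auto simp: B_def)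
  hence x': "x \<in> ball xb r" "\<phi> x \<in> B \<inter> L" "\<psi> (\<phi> x) = x"
    and s': "s \<in> ball xb r" "\<phi> s \<in> B \<inter> L" "\<psi> (\<phi> s) = s"
    using chart_near[OF x t(1)] chart_near[OF _ s(2) t(1)] s(1) by auto
  have g_min: "\<forall>w\<in>B \<inter> L. g (\<psi> (\<phi> s)) \<le> g (\<psi> w)"
  proof
    fix w assume "w \<in> B \<inter> L"
    hence "f (\<psi> w) = ereal (g (\<psi> w))" using param B(1) by blast
    moreover have "f s \<le> f (\<psi> w)" using s(1) by (simp add: argmin_set_def)
    ultimately show "g (\<psi> (\<phi> s)) \<le> g (\<psi> w)" using restriction[OF s'(1)] s(1) s'(3) by simp
  qed
  have "c * (norm (\<phi> x - \<phi> s))\<^sup>2 \<le> c * (L\<phi> * dist x s)\<^sup>2"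
    using lipschitz_chart[OF x'(1) s'(1)] c by (intro mult_left_mono power_mono) (auto simp: dist_norm)
  also have "\<dots> = \<alpha> * (dist x s)\<^sup>2" using positive by (simp add: c_def power_mult_distrib)
  also have "\<dots> \<le> g (\<psi> (\<phi> x)) - g (\<psi> (\<phi> s))"
    using growth restriction[OF x'(1) x(1)] restriction[OF s'(1)] s(1) x'(3) s'(3) by simp
  finally have growth': "c * (norm (\<phi> x - \<phi> s))\<^sup>2 \<le> g (\<psi> (\<phi> x)) - g (\<psi> (\<phi> s))" .
  have "ereal (c / (2 * L\<psi>\<^sup>2) * infdist (\<psi> (\<phi> x)) (argmin_set f \<inter> M)) \<le> slope_on f M (\<psi> (\<phi> x))"
  proof (rule slope_on_ge_in_chart[where B = B and \<psi> = \<psi> and \<psi>' = \<psi>' and \<psi>'' = \<psi>'' and g = g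
        and g' = g' and g'' = g'' and E = "comp_second_deriv g' g'' \<psi> \<psi>' \<psi>'' (\<phi> xb) (\<phi> x - \<phi> s)"])
    show "\<forall>a\<in>B. \<forall>b\<in>B. norm (\<psi> a - \<psi> b) \<le> L\<psi> * norm (a - b)" using lipschitz_param B(1) by blast
    show "\<forall>w\<in>B \<inter> L. \<psi> w \<in> M \<and> f (\<psi> w) = ereal (g (\<psi> w))" using param B(1) by blast
    show "\<forall>w\<in>B. \<bar>comp_second_deriv g' g'' \<psi> \<psi>' \<psi>'' w (\<phi> x - \<phi> s)
        - comp_second_deriv g' g'' \<psi> \<psi>' \<psi>'' (\<phi> xb) (\<phi> x - \<phi> s)\<bar> \<le> c / 2 * (norm (\<phi> x - \<phi> s))\<^sup>2"
    proof -
      have "c / 2 = \<alpha> / (2 * L\<phi>\<^sup>2)" by (simp add: c_def)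
      thus ?thesis using close unfolding B_def by (simp only:) blast
    qed
  qed (use B deriv_param deriv2_param deriv_restriction deriv2_restriction fin subspace positive
      s' x' s(1) g_min c growth' in auto)
  moreover have "c / (2 * L\<psi>\<^sup>2) = \<alpha> / (2 * L\<phi>\<^sup>2 * L\<psi>\<^sup>2)" by (simp add: c_def)
  ultimately show ?thesis using x'(3) by simp
qed

lemma (in C2_slice_chart) quadratic_growth_imp_error_bound:
  assumes fin: "\<forall>y. f y \<noteq> -\<infinity>" and \<alpha>: "\<alpha> > 0" and \<rho>: "\<rho> > 0"
    and growth: "\<forall>x\<in>ball xb \<rho> \<inter> M. \<exists>s\<in>argmin_set f \<inter> M.
      dist x s \<le> dist x xb \<and> f s + ereal (\<alpha> * (dist x s)\<^sup>2) \<le> f x"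
  shows "\<exists>\<epsilon>>0. \<exists>\<mu>>0. \<forall>x\<in>ball xb \<epsilon> \<inter> M. ereal (\<mu> * infdist x (argmin_set f \<inter> M)) \<le> slope_on f M x"
proof -
  have "\<alpha> / (2 * L\<phi>\<^sup>2) > 0" using \<alpha> positive by simp
  then obtain \<delta> where \<delta>: "\<delta> > 0" "\<forall>w\<in>ball (\<phi> xb) \<delta>. \<forall>v. \<bar>comp_second_deriv g' g'' \<psi> \<psi>' \<psi>'' w v
      - comp_second_deriv g' g'' \<psi> \<psi>' \<psi>'' (\<phi> xb) v\<bar> \<le> \<alpha> / (2 * L\<phi>\<^sup>2) * (norm v)\<^sup>2"
    using second_deriv_continuous by blast
  define \<epsilon> where "\<epsilon> = min \<rho> (min (r / 2) (min r \<delta> / (2 * L\<phi>)))"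
  have "\<epsilon> \<le> min r \<delta> / (2 * L\<phi>)" by (simp add: \<epsilon>_def)
  hence \<epsilon>: "\<epsilon> > 0" "\<epsilon> \<le> \<rho>" "2 * \<epsilon> \<le> r" "L\<phi> * (2 * \<epsilon>) \<le> min r \<delta>"
    using positive \<rho> \<delta> by (auto simp: \<epsilon>_def field_simps)
  have "ereal (\<alpha> / (2 * L\<phi>\<^sup>2 * L\<psi>\<^sup>2) * infdist x (argmin_set f \<inter> M)) \<le> slope_on f M x"
    if x: "x \<in> ball xb \<epsilon> \<inter> M" for x
  proof -
    obtain s where s: "s \<in> argmin_set f \<inter> M" "dist x s \<le> dist x xb"
      and growth_x: "f s + ereal (\<alpha> * (dist x s)\<^sup>2) \<le> f x"
      using growth x \<epsilon>(2) by fastforce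
    have "dist s xb < 2 * \<epsilon>" "dist x xb < 2 * \<epsilon>"
      using dist_triangle[of s xb x] s(2) x \<epsilon>(1) by (simp_all add: dist_commute)
    moreover have "\<forall>w\<in>ball (\<phi> xb) (min r \<delta>). \<forall>v. \<bar>comp_second_deriv g' g'' \<psi> \<psi>' \<psi>'' w v
        - comp_second_deriv g' g'' \<psi> \<psi>' \<psi>'' (\<phi> xb) v\<bar> \<le> \<alpha> / (2 * L\<phi>\<^sup>2) * (norm v)\<^sup>2"
      using \<delta>(2) by auto
    ultimately show ?thesis
      using slope_on_ge_near[OF fin \<alpha> _ _ s(1) _ \<epsilon>(3) \<epsilon>(4) _ _ growth_x] x by simp
  qed
  moreover have "\<alpha> / (2 * L\<phi>\<^sup>2 * L\<psi>\<^sup>2) > 0" using \<alpha> positive by simp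
  ultimately show ?thesis using \<epsilon>(1) by blast
qed

lemma error_bound_imp_error_bound_on_manifold:
  fixes f :: "'a::euclidean_space \<Rightarrow> ereal"
  assumes cf: "closed_fun f" and fin: "\<forall>y. f y \<noteq> -\<infinity>" and idm: "identifiable_manifold f M xb"
    and xb: "xb \<in> argmin_set f" and \<epsilon>: "\<epsilon> > 0" and \<mu>: "\<mu> > 0"
    and bound: "\<forall>x\<in>ball xb \<epsilon>. ereal (\<mu> * infdist x (argmin_set f)) \<le> slope f x"
  shows "\<exists>\<epsilon>>0. \<exists>\<mu>>0. \<forall>x\<in>ball xb \<epsilon> \<inter> M. ereal (\<mu> * infdist x (argmin_set f \<inter> M)) \<le> slope_on f M x"
proof -
  obtain r \<phi> \<psi> L L\<phi> L\<psi> \<psi>' \<psi>'' g g' g'' where chart: "C2_slice_chart f M xb r \<phi> \<psi> L L\<phi> L\<psi> \<psi>' \<psi>'' g g' g''"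
    using idm C2_submanifold_local_parametrization unfolding identifiable_manifold_def by blast
  obtain \<delta> where \<delta>: "\<delta> > 0" "\<forall>s\<in>argmin_set f. dist s xb < \<delta> \<longrightarrow> s \<in> M"
    using identifiable_manifold_contains_nearby_minimizers[OF idm xb] by blast
  define \<rho> where "\<rho> = min (\<epsilon> / 2) (\<delta> / 2)"
  have "\<exists>s\<in>argmin_set f \<inter> M. dist x s \<le> dist x xb \<and> f s + ereal (\<mu> / 4 * (dist x s)\<^sup>2) \<le> f x"
    if x: "x \<in> ball xb \<rho> \<inter> M" for x
  proof -
    obtain s where s: "s \<in> argmin_set f" "infdist x (argmin_set f) = dist x s"
      using infdist_attains_inf[OF closed_fun_imp_closed_argmin_set[OF cf]] xb by blast
    have "dist x s \<le> dist x xb" using infdist_le[OF xb, of x] s(2) by simp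
    hence "dist s xb < \<delta>" using dist_triangle[of s xb x] x by (simp add: \<rho>_def dist_commute)
    moreover have "x \<in> ball xb (\<epsilon> / 2)" using x by (simp add: \<rho>_def)
    hence "f xb + ereal (\<mu> / 4 * (dist x s)\<^sup>2) \<le> f x"
      using error_bound_imp_quadratic_growth[OF cf fin xb \<epsilon> \<mu> bound] s(2) by metis
    moreover have "f s = f xb" using s(1) xb by (auto simp: argmin_set_def intro: antisym)
    ultimately show ?thesis using s(1) \<delta>(2) \<open>dist x s \<le> dist x xb\<close> by auto
  qed
  moreover have "\<rho> > 0" using \<epsilon> \<delta> by (simp add: \<rho>_def)
  ultimately show ?thesis
    using C2_slice_chart.quadratic_growth_imp_error_bound[OF chart fin, of "\<mu> / 4" \<rho>] \<mu> by auto
qed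

theorem theorem2:
  fixes f :: "'a::euclidean_space \<Rightarrow> ereal" and M :: "'a set" and xb :: 'a
  assumes "\<forall>x. f x \<noteq> -\<infinity>"
    and "closed_fun f"
    and "subdiff_continuous f"
    and "argmin_set f \<noteq> {}"
    and "xb \<in> argmin_set f"
    and "xb \<in> M"
    and "identifiable_manifold f M xb"
  shows "(\<exists>\<epsilon>>0. \<exists>\<mu>>0. \<forall>x\<in>ball xb \<epsilon>.
            ereal (\<mu> * infdist x (argmin_set f)) \<le> slope f x)
     \<longleftrightarrow> (\<exists>\<epsilon>>0. \<exists>\<mu>>0. \<forall>x\<in>ball xb \<epsilon> \<inter> M.
            ereal (\<mu> * infdist x (argmin_set f \<inter> M)) \<le> slope_on f M x)"
proof
  assume "\<exists>\<epsilon>>0. \<exists>\<mu>>0. \<forall>x\<in>ball xb \<epsilon>. ereal (\<mu> * infdist x (argmin_set f)) \<le> slope f x"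
  then obtain \<epsilon> \<mu> where "\<epsilon> > 0" "\<mu> > 0"
    "\<forall>x\<in>ball xb \<epsilon>. ereal (\<mu> * infdist x (argmin_set f)) \<le> slope f x" by blast
  thus "\<exists>\<epsilon>>0. \<exists>\<mu>>0. \<forall>x\<in>ball xb \<epsilon> \<inter> M.
      ereal (\<mu> * infdist x (argmin_set f \<inter> M)) \<le> slope_on f M x"
    by (rule error_bound_imp_error_bound_on_manifold[OF assms(2,1,7,5)])
next
  assume "\<exists>\<epsilon>>0. \<exists>\<mu>>0. \<forall>x\<in>ball xb \<epsilon> \<inter> M.
      ereal (\<mu> * infdist x (argmin_set f \<inter> M)) \<le> slope_on f M x"
  then obtain \<epsilon> \<mu> where "\<epsilon> > 0" "\<mu> > 0"
    "\<forall>x\<in>ball xb \<epsilon> \<inter> M. ereal (\<mu> * infdist x (argmin_set f \<inter> M)) \<le> slope_on f M x" by blast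
  thus "\<exists>\<epsilon>>0. \<exists>\<mu>>0. \<forall>x\<in>ball xb \<epsilon>. ereal (\<mu> * infdist x (argmin_set f)) \<le> slope f x"
    by (rule error_bound_on_manifold_imp_error_bound[OF assms(2,1,3,7,5)])
qed

end
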